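(* Let $s\ge 1$ and let $f,g\in\mathbb{K}[y]$ be polynomials of degree $s$ with nonzero constant terms. Then $A_f\cong A_g$ as $\mathbb{K}$-algebras if and only if there exist $\lambda,c\in\mathbb{K}^*$ such that either $g(y)=\lambda f(cy)$ or $g(y)=\lambda\, y^{s} f(c\,y^{-1})$.
   Context: $\mathbb{K}$ is an algebraically closed field of characteristic $0$. For a polynomial $h\in\mathbb{K}[y]$ with nonzero constant term, $A_h:=\mathbb{K}[x_1,x_2,y^{\pm1}]/(x_1x_2-h(y))$. (For the shearing polyptych lattice $\mathcal M_s$, the detropicalized algebras are exactly the algebras $A_h$ with $\deg h=s$.) *)

theory Defs
  imports "HOL-Computational_Algebra.Polynomial" "HOL-Algebra.QuotRing"
begin

definition alg_closed_field :: "'a::field itself \<Rightarrow> bool" where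
  "alg_closed_field _ \<longleftrightarrow> (\<forall>p::'a poly. degree p \<ge> 1 \<longrightarrow> (\<exists>x. poly p x = 0))"

text \<open>The polynomial ring K[x1,x2,y,z] as iterated univariate polynomials:
  outermost variable x1, then x2, then z, innermost y.\<close>
type_synonym 'a mpoly4 = "'a poly poly poly poly"

definition tc_ring :: "('a::comm_ring_1) ring" where
  "tc_ring = \<lparr>carrier = UNIV, monoid.mult = (*), one = 1, zero = 0, add = (+)\<rparr>"

definition X1 :: "'a::comm_ring_1 mpoly4" where "X1 = [:0, 1:]"
definition X2 :: "'a::comm_ring_1 mpoly4" where "X2 = [:[:0, 1:]:]"
definition Zv :: "'a::comm_ring_1 mpoly4" where "Zv = [:[:[:0, 1:]:]:]"
definition Yv :: "'a::comm_ring_1 mpoly4" where "Yv = [:[:[:[:0, 1:]:]:]:]"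
definition const4 :: "'a::comm_ring_1 \<Rightarrow> 'a mpoly4" where "const4 c = [:[:[:[:c:]:]:]:]"
definition hY :: "'a::comm_ring_1 poly \<Rightarrow> 'a mpoly4" where "hY h = [:[:[:h:]:]:]"

text \<open>A_h = K[x1,x2,y^{\<pm>1}]/(x1 x2 - h(y)) = K[x1,x2,y,z]/(x1 x2 - h(y), y z - 1).\<close>
definition A_ideal :: "'a::comm_ring_1 poly \<Rightarrow> 'a mpoly4 set" where
  "A_ideal h = genideal tc_ring {X1 * X2 - hY h, Yv * Zv - 1}"

definition A_alg :: "'a::comm_ring_1 poly \<Rightarrow> 'a mpoly4 set ring" where
  "A_alg h = tc_ring Quot (A_ideal h)"

definition A_kalg_iso :: "'a::comm_ring_1 poly \<Rightarrow> 'a poly \<Rightarrow> bool" where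
  "A_kalg_iso f g \<longleftrightarrow> (\<exists>\<phi>. \<phi> \<in> ring_iso (A_alg f) (A_alg g) \<and>
     (\<forall>c. \<phi> (A_ideal f +>\<^bsub>tc_ring\<^esub> const4 c) = A_ideal g +>\<^bsub>tc_ring\<^esub> const4 c))"

end

theory Submission
  imports Defs
begin

text \<open>
  \<open>A_h\<close> embeds into the functions on the torus \<open>(a, t) \<in> K\<^sup>* \<times> K\<^sup>*\<close> via \<open>x1 \<mapsto> a\<close>,
  \<open>x2 \<mapsto> h(t)/a\<close>, \<open>y \<mapsto> t\<close>; injectivity comes from a normal form \<open>A(x1, y) + B(x2, y)\<close>.
  If \<open>g(y) = \<lambda> f(c y)\<close> or \<open>g(y) = \<lambda> y\<^sup>s f(c/y)\<close>, the substitutions \<open>x1 \<mapsto> x1/\<lambda>, y \<mapsto> c y\<close>,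
  resp. \<open>x1 \<mapsto> y\<^sup>-\<^sup>s x1/\<lambda>, y \<mapsto> c y\<^sup>-\<^sup>1\<close>, induce isomorphisms.
  Conversely, the units of \<open>A_h\<close> are the \<open>c y\<^sup>k\<close>, so an isomorphism \<open>\<phi>\<close> maps \<open>y\<close> to \<open>c y\<^sup>\<plusminus>\<^sup>1\<close>.
  Then \<open>f(c y\<^sup>\<plusminus>\<^sup>1) = \<phi>(x1) \<phi>(x2)\<close> is a product in \<open>A_g\<close>; comparing numerators as polynomials
  in \<open>a\<close> shows that either \<open>g\<close> divides the polynomial \<open>f(c y)\<close>, resp. \<open>y\<^sup>s f(c/y)\<close>, which has the
  same degree as \<open>g\<close>, or \<open>\<phi>(x1)\<close> and \<open>\<phi>(x2)\<close> lie in \<open>K[y\<^sup>\<plusminus>\<^sup>1]\<close>, which is impossible for a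
  surjective \<open>\<phi>\<close>.
\<close>

lemma tc_ring_simps [simp]:
  "carrier tc_ring = UNIV" "mult tc_ring = (*)" "one tc_ring = 1" "zero tc_ring = 0" "add tc_ring = (+)"
  by (simp_all add: tc_ring_def)

lemma cring_tc_ring: "cring (tc_ring :: 'a::comm_ring_1 ring)"
proof (rule cringI)
  show "abelian_group (tc_ring :: 'a ring)"
    by (rule abelian_groupI) (auto simp: algebra_simps intro: exI[of _ "- _"])
  show "Group.comm_monoid (tc_ring :: 'a ring)"
    by (rule comm_monoidI) (auto simp: algebra_simps)
qed (auto simp: algebra_simps)

lemma a_inv_tc_ring [simp]: "a_inv tc_ring (x::'a::comm_ring_1) = - x"
proof -
  interpret cring "tc_ring :: 'a ring" by (rule cring_tc_ring)
  show ?thesis by (rule minus_equality) auto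
qed

lemma a_minus_tc_ring [simp]: "a_minus tc_ring (x::'a::comm_ring_1) y = x - y"
  by (simp add: a_minus_def)

definition A_rels :: "'a::comm_ring_1 poly \<Rightarrow> 'a mpoly4 set" where
  "A_rels h = {P. \<exists>U V. P = U * (X1 * X2 - hY h) + V * (Yv * Zv - 1)}"

lemma A_rels_add:
  assumes "P \<in> A_rels h" "Q \<in> A_rels h"
  shows "P + Q \<in> A_rels h"
proof -
  obtain U V U' V' where PQ: "P = U * (X1 * X2 - hY h) + V * (Yv * Zv - 1)"
    "Q = U' * (X1 * X2 - hY h) + V' * (Yv * Zv - 1)"
    using assms unfolding A_rels_def by blast
  have "P + Q = (U + U') * (X1 * X2 - hY h) + (V + V') * (Yv * Zv - 1)"
    unfolding PQ by (simp add: algebra_simps)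
  then show ?thesis unfolding A_rels_def by blast
qed

lemma A_rels_mult:
  assumes "P \<in> A_rels h"
  shows "Q * P \<in> A_rels h"
proof -
  obtain U V where P: "P = U * (X1 * X2 - hY h) + V * (Yv * Zv - 1)"
    using assms unfolding A_rels_def by blast
  have "Q * P = (Q * U) * (X1 * X2 - hY h) + (Q * V) * (Yv * Zv - 1)"
    unfolding P by (simp add: algebra_simps)
  then show ?thesis unfolding A_rels_def by blast
qed

lemma A_rels_uminus: "P \<in> A_rels h \<Longrightarrow> - P \<in> A_rels h"
  using A_rels_mult[of P h "- 1"] by simp

lemma A_rels_generators: "X1 * X2 - hY h \<in> A_rels h" "Yv * Zv - 1 \<in> A_rels h"
  unfolding A_rels_def by (force intro: exI[of _ 0] exI[of _ 1])+

lemma A_rels_0: "0 \<in> A_rels h"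
  using A_rels_mult[OF A_rels_generators(1), of 0] by simp

lemma ideal_A_rels: "ideal (A_rels h) tc_ring"
proof -
  interpret cring "tc_ring :: 'a mpoly4 ring" by (rule cring_tc_ring)
  show ?thesis
  proof (rule idealI)
    show "subgroup (A_rels h) (add_monoid tc_ring)"
      by (rule subgroup.intro, unfold a_inv_def[symmetric])
        (auto simp: A_rels_0 A_rels_add A_rels_uminus)
  qed (simp_all add: ring_axioms, (metis A_rels_mult mult.commute)+)
qed

lemma A_ideal_eq_A_rels: "A_ideal h = A_rels h"
proof -
  interpret cring "tc_ring :: 'a mpoly4 ring" by (rule cring_tc_ring)
  interpret I: ideal "A_ideal h" tc_ring
    unfolding A_ideal_def by (rule genideal_ideal) simp
  have gens: "X1 * X2 - hY h \<in> A_ideal h" "Yv * Zv - 1 \<in> A_ideal h"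
    unfolding A_ideal_def using genideal_self[of "{X1 * X2 - hY h, Yv * Zv - 1}"] by auto
  have "A_ideal h \<subseteq> A_rels h"
    unfolding A_ideal_def by (rule genideal_minimal[OF ideal_A_rels]) (simp add: A_rels_generators)
  moreover have "A_rels h \<subseteq> A_ideal h"
    unfolding A_rels_def using I.I_l_closed[OF gens(1)] I.I_l_closed[OF gens(2)] I.a_closed by auto
  ultimately show ?thesis by blast
qed

lemma ideal_A_ideal: "ideal (A_ideal h) tc_ring"
  unfolding A_ideal_eq_A_rels by (rule ideal_A_rels)

definition A_cong :: "'a::comm_ring_1 poly \<Rightarrow> 'a mpoly4 \<Rightarrow> 'a mpoly4 \<Rightarrow> bool" where
  "A_cong h P Q \<longleftrightarrow> P - Q \<in> A_rels h"

lemma A_cong_0_iff: "A_cong h P 0 \<longleftrightarrow> P \<in> A_rels h"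
  by (simp add: A_cong_def)

lemma A_cong_refl: "A_cong h P P"
  by (simp add: A_cong_def A_rels_0)

lemma A_cong_sym: "A_cong h P Q \<Longrightarrow> A_cong h Q P"
  unfolding A_cong_def using A_rels_uminus by fastforce

lemma A_cong_trans [trans]: "A_cong h P Q \<Longrightarrow> A_cong h Q R \<Longrightarrow> A_cong h P R"
  unfolding A_cong_def using A_rels_add by fastforce

lemma A_cong_add: "A_cong h P Q \<Longrightarrow> A_cong h P' Q' \<Longrightarrow> A_cong h (P + P') (Q + Q')"
  unfolding A_cong_def using A_rels_add by (fastforce simp: algebra_simps)

lemma A_cong_mult:
  assumes "A_cong h P Q" "A_cong h P' Q'"
  shows "A_cong h (P * P') (Q * Q')"
proof -
  have "P * P' - Q * Q' = P' * (P - Q) + Q * (P' - Q')"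
    by (simp add: algebra_simps)
  then show ?thesis
    using assms unfolding A_cong_def by (metis A_rels_add A_rels_mult)
qed

lemma A_cong_mult_left: "A_cong h P Q \<Longrightarrow> A_cong h (R * P) (R * Q)"
  by (rule A_cong_mult[OF A_cong_refl])

lemma A_cong_pow: "A_cong h P Q \<Longrightarrow> A_cong h (P ^ n) (Q ^ n)"
  by (induct n) (auto intro: A_cong_mult A_cong_refl)

lemma A_cong_generators: "A_cong h (X1 * X2) (hY h)" "A_cong h (Yv * Zv) 1"
  using A_rels_generators by (simp_all add: A_cong_def)

definition A_cls :: "'a::comm_ring_1 poly \<Rightarrow> 'a mpoly4 \<Rightarrow> 'a mpoly4 set" where
  "A_cls h P = A_ideal h +>\<^bsub>tc_ring\<^esub> P"

lemma A_cls_eq_iff: "A_cls h P = A_cls h Q \<longleftrightarrow> A_cong h P Q"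
proof -
  interpret cring "tc_ring :: 'a mpoly4 ring" by (rule cring_tc_ring)
  show ?thesis
    using quotient_eq_iff_same_a_r_cos[OF ideal_A_ideal, of P Q]
    by (simp add: A_cls_def A_cong_def A_ideal_eq_A_rels)
qed

lemma A_alg_carrier: "carrier (A_alg h) = range (A_cls h)"
  unfolding A_alg_def FactRing_def A_RCOSETS_def' A_cls_def by auto

lemma A_alg_mult: "A_cls h P \<otimes>\<^bsub>A_alg h\<^esub> A_cls h Q = A_cls h (P * Q)"
proof -
  interpret ideal "A_ideal h" tc_ring by (rule ideal_A_ideal)
  show ?thesis unfolding A_alg_def FactRing_def A_cls_def using rcoset_mult_add[of P Q] by simp
qed

lemma A_alg_add: "A_cls h P \<oplus>\<^bsub>A_alg h\<^esub> A_cls h Q = A_cls h (P + Q)"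
proof -
  interpret ideal "A_ideal h" tc_ring by (rule ideal_A_ideal)
  show ?thesis unfolding A_alg_def FactRing_def A_cls_def using a_rcos_sum[of P Q] by simp
qed

lemma A_alg_one: "\<one>\<^bsub>A_alg h\<^esub> = A_cls h 1"
  unfolding A_alg_def FactRing_def A_cls_def by simp

lemma ring_A_alg: "ring (A_alg h)"
proof -
  interpret ideal "A_ideal h" tc_ring by (rule ideal_A_ideal)
  show ?thesis unfolding A_alg_def by (rule quotient_is_ring)
qed

definition A_kalg_hom :: "'a::comm_ring_1 poly \<Rightarrow> 'a poly \<Rightarrow> ('a mpoly4 set \<Rightarrow> 'a mpoly4 set) \<Rightarrow> bool" where
  "A_kalg_hom f g \<phi> \<longleftrightarrow> \<phi> \<in> ring_hom (A_alg f) (A_alg g) \<and>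
     (\<forall>c. \<phi> (A_cls f (const4 c)) = A_cls g (const4 c))"

lemma A_kalg_iso_iff: "A_kalg_iso f g \<longleftrightarrow> (\<exists>\<phi>. \<phi> \<in> ring_iso (A_alg f) (A_alg g) \<and> A_kalg_hom f g \<phi>)"
  by (auto simp: A_kalg_iso_def A_kalg_hom_def A_cls_def ring_iso_def)

definition is_ring_hom :: "('a::comm_ring_1 \<Rightarrow> 'b::comm_ring_1) \<Rightarrow> bool" where
  "is_ring_hom k \<longleftrightarrow> k 1 = 1 \<and> (\<forall>x y. k (x + y) = k x + k y) \<and> (\<forall>x y. k (x * y) = k x * k y)"

lemma is_ring_hom_1: "is_ring_hom k \<Longrightarrow> k 1 = 1"
  and is_ring_hom_add: "is_ring_hom k \<Longrightarrow> k (x + y) = k x + k y"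
  and is_ring_hom_mult: "is_ring_hom k \<Longrightarrow> k (x * y) = k x * k y"
  by (simp_all add: is_ring_hom_def)

lemma is_ring_hom_0: "is_ring_hom k \<Longrightarrow> k 0 = 0"
  using is_ring_hom_add[of k 0 0] by simp

lemma is_ring_hom_diff: "is_ring_hom k \<Longrightarrow> k (x - y) = k x - k y"
  using is_ring_hom_add[of k "x - y" y] by (simp add: eq_diff_eq)

lemma is_ring_hom_pow: "is_ring_hom k \<Longrightarrow> k (x ^ n) = k x ^ n"
  by (induct n) (simp_all add: is_ring_hom_1 is_ring_hom_mult)

lemma is_ring_hom_sum: "is_ring_hom k \<Longrightarrow> k (sum F S) = (\<Sum>i\<in>S. k (F i))"
  by (induct S rule: infinite_finite_induct) (simp_all add: is_ring_hom_0 is_ring_hom_add)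

lemma is_ring_hom_id: "is_ring_hom (\<lambda>x. x)"
  by (simp add: is_ring_hom_def)

lemma is_ring_hom_map_poly:
  assumes k: "is_ring_hom k"
  shows "is_ring_hom (map_poly k)"
proof -
  have add: "map_poly k (p + q) = map_poly k p + map_poly k q" for p q
    by (intro poly_eqI) (simp add: coeff_map_poly k is_ring_hom_0 is_ring_hom_add)
  have smult: "map_poly k (smult c p) = smult (k c) (map_poly k p)" for c p
    by (intro poly_eqI) (simp add: coeff_map_poly k is_ring_hom_0 is_ring_hom_mult)
  have "map_poly k (p * q) = map_poly k p * map_poly k q" for p q
    by (induct p) (simp_all add: add smult map_poly_pCons k is_ring_hom_0)
  with add show ?thesis
    by (simp add: is_ring_hom_def map_poly_1 is_ring_hom_1[OF k])
qed

definition eval_poly :: "('a::comm_ring_1 \<Rightarrow> 'b::comm_ring_1) \<Rightarrow> 'b \<Rightarrow> 'a poly \<Rightarrow> 'b" where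
  "eval_poly k x p = poly (map_poly k p) x"

lemma is_ring_hom_eval_poly: "is_ring_hom k \<Longrightarrow> is_ring_hom (eval_poly k x)"
  using is_ring_hom_map_poly[of k] unfolding is_ring_hom_def eval_poly_def by auto

lemma eval_poly_pCons: "is_ring_hom k \<Longrightarrow> eval_poly k x (pCons c p) = k c + x * eval_poly k x p"
  by (simp add: eval_poly_def map_poly_pCons is_ring_hom_0)

lemma eval_poly_id: "eval_poly (\<lambda>x. x) x p = poly p x"
  by (simp add: eval_poly_def)

lemma eval_poly_monom: "is_ring_hom k \<Longrightarrow> eval_poly k x (monom c n) = k c * x ^ n"
  by (simp add: eval_poly_def map_poly_monom is_ring_hom_0 poly_monom)

lemma eval_poly_as_sum:
  assumes k: "is_ring_hom k" and p: "degree p \<le> m"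
  shows "eval_poly k x p = (\<Sum>i\<le>m. k (coeff p i) * x ^ i)"
proof -
  have "eval_poly k x p = eval_poly k x (\<Sum>i\<le>m. monom (coeff p i) i)"
    using poly_as_sum_of_monoms'[OF p] by simp
  also have "\<dots> = (\<Sum>i\<le>m. k (coeff p i) * x ^ i)"
    using k by (simp add: is_ring_hom_sum[OF is_ring_hom_eval_poly] eval_poly_monom)
  finally show ?thesis .
qed

lemma eval_poly_comp:
  assumes k: "is_ring_hom k" and l: "is_ring_hom l"
  shows "l (eval_poly k x p) = eval_poly (l \<circ> k) (l x) p"
proof (induct p)
  case 0
  show ?case using k l by (simp add: eval_poly_def is_ring_hom_0)
next
  case (pCons a p)
  have lk: "is_ring_hom (\<lambda>a. l (k a))"
    using k l by (simp add: is_ring_hom_def)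
  with pCons show ?case
    using k l by (simp add: eval_poly_pCons is_ring_hom_add is_ring_hom_mult comp_def)
qed

text \<open>\<open>subst4 k e1 e2 e3 e4\<close> maps coefficients by \<open>k\<close> and substitutes \<open>e1, e2, e3, e4\<close>
  for \<open>x1, x2, z, y\<close>, following the nesting order of \<^typ>\<open>'a mpoly4\<close>.\<close>

definition subst4 ::
    "('a::comm_ring_1 \<Rightarrow> 'b::comm_ring_1) \<Rightarrow> 'b \<Rightarrow> 'b \<Rightarrow> 'b \<Rightarrow> 'b \<Rightarrow> 'a mpoly4 \<Rightarrow> 'b" where
  "subst4 k e1 e2 e3 e4 = eval_poly (eval_poly (eval_poly (eval_poly k e4) e3) e2) e1"

lemma is_ring_hom_subst4: "is_ring_hom k \<Longrightarrow> is_ring_hom (subst4 k e1 e2 e3 e4)"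
  unfolding subst4_def by (intro is_ring_hom_eval_poly)

lemma subst4_simps:
  assumes "is_ring_hom k"
  shows "subst4 k e1 e2 e3 e4 X1 = e1" "subst4 k e1 e2 e3 e4 X2 = e2"
    "subst4 k e1 e2 e3 e4 Zv = e3" "subst4 k e1 e2 e3 e4 Yv = e4"
    "subst4 k e1 e2 e3 e4 (const4 c) = k c"
    "subst4 k e1 e2 e3 e4 (hY p) = eval_poly k e4 p"
  using assms
  by (simp_all add: subst4_def X1_def X2_def Zv_def Yv_def const4_def hY_def eval_poly_def
      map_poly_pCons is_ring_hom_eval_poly is_ring_hom_0 is_ring_hom_1)

lemma subst4_comp:
  assumes k: "is_ring_hom k" and l: "is_ring_hom l"
  shows "l (subst4 k e1 e2 e3 e4 P) = subst4 (l \<circ> k) (l e1) (l e2) (l e3) (l e4) P"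
proof -
  have r4: "is_ring_hom (eval_poly k e4)"
    using k by (rule is_ring_hom_eval_poly)
  have r3: "is_ring_hom (eval_poly (eval_poly k e4) e3)"
    using r4 by (rule is_ring_hom_eval_poly)
  have r2: "is_ring_hom (eval_poly (eval_poly (eval_poly k e4) e3) e2)"
    using r3 by (rule is_ring_hom_eval_poly)
  have c4: "l \<circ> eval_poly k e4 = eval_poly (l \<circ> k) (l e4)"
    by (rule ext) (simp add: eval_poly_comp[OF k l])
  have c3: "l \<circ> eval_poly (eval_poly k e4) e3 = eval_poly (eval_poly (l \<circ> k) (l e4)) (l e3)"
    by (rule ext) (simp add: eval_poly_comp[OF r4 l] c4)
  have c2: "l \<circ> eval_poly (eval_poly (eval_poly k e4) e3) e2
      = eval_poly (eval_poly (eval_poly (l \<circ> k) (l e4)) (l e3)) (l e2)"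
    by (rule ext) (simp add: eval_poly_comp[OF r3 l] c3)
  show ?thesis
    unfolding subst4_def by (simp add: eval_poly_comp[OF r2 l] c2)
qed

lemma is_ring_hom_hY: "is_ring_hom (hY :: 'a::comm_ring_1 poly \<Rightarrow> 'a mpoly4)"
  by (simp add: is_ring_hom_def hY_def one_pCons)

lemma hY_X: "hY [:0, 1:] = Yv"
  by (simp add: hY_def Yv_def)

lemma is_ring_hom_const4: "is_ring_hom (const4 :: 'a::comm_ring_1 \<Rightarrow> 'a mpoly4)"
  by (simp add: is_ring_hom_def const4_def one_pCons)

lemma mpoly4_induct [case_names const X1 X2 Yv Zv add mult]:
  fixes Q :: "'a::comm_ring_1 mpoly4 \<Rightarrow> bool"
  assumes const: "\<And>c. Q (const4 c)" and X1: "Q X1" and X2: "Q X2" and Yv: "Q Yv" and Zv: "Q Zv"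
    and add: "\<And>P R. Q P \<Longrightarrow> Q R \<Longrightarrow> Q (P + R)" and mult: "\<And>P R. Q P \<Longrightarrow> Q R \<Longrightarrow> Q (P * R)"
  shows "Q P"
proof -
  have l1: "Q [:[:[:p:]:]:]" for p :: "'a poly"
  proof (induct p)
    case (pCons a p)
    have "[:[:[:pCons a p:]:]:] = const4 a + Yv * [:[:[:p:]:]:]"
      by (simp add: const4_def Yv_def)
    then show ?case using add[OF const mult[OF Yv pCons(2)]] by simp
  qed (use const[of 0] in \<open>simp add: const4_def\<close>)
  have l2: "Q [:[:r:]:]" for r :: "'a poly poly"
  proof (induct r)
    case (pCons a p)
    have "[:[:pCons a p:]:] = [:[:[:a:]:]:] + Zv * [:[:p:]:]"
      by (simp add: Zv_def)
    then show ?case using add[OF l1 mult[OF Zv pCons(2)]] by simp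
  qed (use l1[of 0] in simp)
  have l3: "Q [:w:]" for w :: "'a poly poly poly"
  proof (induct w)
    case (pCons a p)
    have "[:pCons a p:] = [:[:a:]:] + X2 * [:p:]"
      by (simp add: X2_def)
    then show ?case using add[OF l2 mult[OF X2 pCons(2)]] by simp
  qed (use l2[of 0] in simp)
  show "Q P"
  proof (induct P)
    case (pCons a p)
    have "pCons a p = [:a:] + X1 * p"
      by (simp add: X1_def)
    then show ?case using add[OF l3 mult[OF X1 pCons(2)]] by simp
  qed (use l3[of 0] in simp)
qed

section \<open>A normal form modulo the relations\<close>

definition x1_poly :: "'a::comm_ring_1 poly poly \<Rightarrow> 'a mpoly4" where
  "x1_poly A = eval_poly hY X1 A"

definition x2_poly :: "'a::comm_ring_1 poly poly \<Rightarrow> 'a mpoly4" where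
  "x2_poly B = eval_poly hY X2 B"

lemma is_ring_hom_x1_poly: "is_ring_hom x1_poly"
  and is_ring_hom_x2_poly: "is_ring_hom x2_poly"
  unfolding x1_poly_def[abs_def] x2_poly_def[abs_def] by (rule is_ring_hom_eval_poly[OF is_ring_hom_hY])+

lemma x1_poly_pCons: "x1_poly (pCons c A) = hY c + X1 * x1_poly A"
  and x2_poly_pCons: "x2_poly (pCons c B) = hY c + X2 * x2_poly B"
  by (simp_all add: x1_poly_def x2_poly_def eval_poly_pCons is_ring_hom_hY)

lemma x1_poly_smult: "x1_poly (smult c A) = hY c * x1_poly A"
  and x2_poly_smult: "x2_poly (smult c B) = hY c * x2_poly B"
  using is_ring_hom_mult[OF is_ring_hom_x1_poly, of "[:c:]" A]
    is_ring_hom_mult[OF is_ring_hom_x2_poly, of "[:c:]" B]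
  by (simp_all add: x1_poly_pCons x2_poly_pCons is_ring_hom_0[OF is_ring_hom_x1_poly]
      is_ring_hom_0[OF is_ring_hom_x2_poly])

lemmas x_poly_hom_simps =
  is_ring_hom_0[OF is_ring_hom_x1_poly] is_ring_hom_add[OF is_ring_hom_x1_poly]
  is_ring_hom_mult[OF is_ring_hom_x1_poly] is_ring_hom_1[OF is_ring_hom_x1_poly]
  is_ring_hom_0[OF is_ring_hom_x2_poly] is_ring_hom_add[OF is_ring_hom_x2_poly]
  is_ring_hom_mult[OF is_ring_hom_x2_poly] is_ring_hom_1[OF is_ring_hom_x2_poly]

lemma x1_times_x2_poly:
  assumes "coeff B 0 = 0"
  shows "\<exists>A' B'. coeff B' 0 = 0 \<and> A_cong h (X1 * x2_poly B) (x1_poly A' + x2_poly B')"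
proof -
  obtain B1 where B: "B = pCons 0 B1"
    using assms by (metis coeff_pCons_0 pCons_cases)
  have "X1 * x2_poly B = (X1 * X2) * x2_poly B1"
    unfolding B x2_poly_pCons by (simp add: is_ring_hom_0[OF is_ring_hom_hY])
  then have "A_cong h (X1 * x2_poly B) (hY h * x2_poly B1)"
    by (simp add: A_cong_mult A_cong_generators(1) A_cong_refl)
  moreover have "hY h * x2_poly B1
      = x1_poly [:h * coeff B1 0:] + x2_poly (smult h (B1 - [:coeff B1 0:]))"
    by (simp add: x2_poly_smult x1_poly_pCons x2_poly_pCons x_poly_hom_simps
        is_ring_hom_diff[OF is_ring_hom_x2_poly] is_ring_hom_mult[OF is_ring_hom_hY] algebra_simps)
  moreover have "coeff (smult h (B1 - [:coeff B1 0:])) 0 = 0"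
    by simp
  ultimately show ?thesis by metis
qed

lemma x1_poly_times_x2_poly:
  assumes "coeff B 0 = 0"
  shows "\<exists>A' B'. coeff B' 0 = 0 \<and> A_cong h (x1_poly A * x2_poly B) (x1_poly A' + x2_poly B')"
proof (induct A)
  case 0
  show ?case
    by (rule exI[of _ 0], rule exI[of _ 0]) (simp add: x_poly_hom_simps A_cong_refl)
next
  case (pCons c A)
  obtain A2 B2 where IH: "coeff B2 0 = 0" "A_cong h (x1_poly A * x2_poly B) (x1_poly A2 + x2_poly B2)"
    using pCons(2) by blast
  obtain A3 B3 where X: "coeff B3 0 = 0" "A_cong h (X1 * x2_poly B2) (x1_poly A3 + x2_poly B3)"
    using x1_times_x2_poly[OF IH(1)] by blast
  have "x1_poly (pCons c A) * x2_poly B = x2_poly (smult c B) + X1 * (x1_poly A * x2_poly B)"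
    by (simp add: x1_poly_pCons x2_poly_smult algebra_simps)
  also have "A_cong h \<dots> (x2_poly (smult c B) + X1 * (x1_poly A2 + x2_poly B2))"
    by (intro A_cong_add A_cong_refl A_cong_mult_left IH(2))
  also have "\<dots> = x2_poly (smult c B) + (x1_poly (pCons 0 A2) + X1 * x2_poly B2)"
    by (simp add: x1_poly_pCons is_ring_hom_0[OF is_ring_hom_hY] distrib_left)
  also have "A_cong h \<dots> (x2_poly (smult c B) + (x1_poly (pCons 0 A2) + (x1_poly A3 + x2_poly B3)))"
    by (intro A_cong_add A_cong_refl X(2))
  also have "\<dots> = x1_poly (pCons 0 A2 + A3) + x2_poly (smult c B + B3)"
    by (simp add: x_poly_hom_simps algebra_simps)
  finally have "A_cong h (x1_poly (pCons c A) * x2_poly B) (x1_poly (pCons 0 A2 + A3) + x2_poly (smult c B + B3))" .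
  moreover have "coeff (smult c B + B3) 0 = 0"
    using assms X(1) by simp
  ultimately show ?case by metis
qed

text \<open>Since \<open>z\<close> is inverse to \<open>y\<close> and \<open>x1 x2 = h(y)\<close>, every element becomes, after multiplication
  by a power of \<open>y\<close>, of the form \<open>A(x1, y) + B(x2, y)\<close> with \<open>B(0, y) = 0\<close>.\<close>

definition has_normal_form :: "'a::comm_ring_1 poly \<Rightarrow> 'a mpoly4 \<Rightarrow> bool" where
  "has_normal_form h P \<longleftrightarrow> (\<exists>n A B. coeff B 0 = 0 \<and> A_cong h (Yv ^ n * P) (x1_poly A + x2_poly B))"

lemma has_normal_form_x_polys: "coeff B 0 = 0 \<Longrightarrow> has_normal_form h (x1_poly A + x2_poly B)"
  unfolding has_normal_form_def by (rule exI[of _ 0]) (auto intro: A_cong_refl)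

lemma has_normal_form_add:
  assumes "has_normal_form h P" "has_normal_form h R"
  shows "has_normal_form h (P + R)"
proof -
  obtain n A B m A' B' where nf: "coeff B 0 = 0" "A_cong h (Yv ^ n * P) (x1_poly A + x2_poly B)"
    "coeff B' 0 = 0" "A_cong h (Yv ^ m * R) (x1_poly A' + x2_poly B')"
    using assms unfolding has_normal_form_def by blast
  have "Yv ^ (n + m) * (P + R) = Yv ^ m * (Yv ^ n * P) + Yv ^ n * (Yv ^ m * R)"
    by (simp add: algebra_simps power_add)
  also have "A_cong h \<dots> (Yv ^ m * (x1_poly A + x2_poly B) + Yv ^ n * (x1_poly A' + x2_poly B'))"
    by (intro A_cong_add A_cong_mult_left nf)
  also have "\<dots> = x1_poly (smult ([:0,1:] ^ m) A + smult ([:0,1:] ^ n) A')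
      + x2_poly (smult ([:0,1:] ^ m) B + smult ([:0,1:] ^ n) B')"
    by (simp add: x_poly_hom_simps x1_poly_smult x2_poly_smult is_ring_hom_pow[OF is_ring_hom_hY]
        hY_X algebra_simps)
  finally have "A_cong h (Yv ^ (n + m) * (P + R)) (x1_poly (smult ([:0,1:] ^ m) A + smult ([:0,1:] ^ n) A')
      + x2_poly (smult ([:0,1:] ^ m) B + smult ([:0,1:] ^ n) B'))" .
  moreover have "coeff (smult ([:0,1:] ^ m) B + smult ([:0,1:] ^ n) B') 0 = 0"
    using nf by simp
  ultimately show ?thesis
    unfolding has_normal_form_def by blast
qed

lemma has_normal_form_mult:
  assumes "has_normal_form h P" "has_normal_form h R"
  shows "has_normal_form h (P * R)"
proof -
  obtain n A B m A' B' where nf: "coeff B 0 = 0" "A_cong h (Yv ^ n * P) (x1_poly A + x2_poly B)"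
    "coeff B' 0 = 0" "A_cong h (Yv ^ m * R) (x1_poly A' + x2_poly B')"
    using assms unfolding has_normal_form_def by blast
  obtain A1 B1 where m1: "coeff B1 0 = 0" "A_cong h (x1_poly A * x2_poly B') (x1_poly A1 + x2_poly B1)"
    using x1_poly_times_x2_poly[OF nf(3)] by blast
  obtain A2 B2 where m2: "coeff B2 0 = 0" "A_cong h (x1_poly A' * x2_poly B) (x1_poly A2 + x2_poly B2)"
    using x1_poly_times_x2_poly[OF nf(1)] by blast
  have "Yv ^ (n + m) * (P * R) = (Yv ^ n * P) * (Yv ^ m * R)"
    by (simp add: power_add ac_simps)
  also have "A_cong h \<dots> ((x1_poly A + x2_poly B) * (x1_poly A' + x2_poly B'))"
    by (intro A_cong_mult nf)
  also have "\<dots> = x1_poly (A * A') + x2_poly (B * B') + x1_poly A * x2_poly B' + x1_poly A' * x2_poly B"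
    by (simp add: x_poly_hom_simps algebra_simps)
  also have "A_cong h \<dots> (x1_poly (A * A') + x2_poly (B * B') + (x1_poly A1 + x2_poly B1)
      + (x1_poly A2 + x2_poly B2))"
    by (intro A_cong_add A_cong_refl m1 m2)
  also have "\<dots> = x1_poly (A * A' + A1 + A2) + x2_poly (B * B' + B1 + B2)"
    by (simp add: x_poly_hom_simps ac_simps)
  finally have "A_cong h (Yv ^ (n + m) * (P * R)) (x1_poly (A * A' + A1 + A2) + x2_poly (B * B' + B1 + B2))" .
  moreover have "coeff (B * B' + B1 + B2) 0 = 0"
    using nf m1 m2 by (simp add: coeff_mult)
  ultimately show ?thesis
    unfolding has_normal_form_def by blast
qed

lemma normal_form: "has_normal_form h P"
proof (induct P rule: mpoly4_induct)
  case (const c)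
  show ?case
    using has_normal_form_x_polys[of 0 h "[:[:c:]:]"]
    by (simp add: x1_poly_pCons x_poly_hom_simps hY_def const4_def)
next
  case X1
  show ?case
    using has_normal_form_x_polys[of 0 h "[:0, 1:]"]
    by (simp add: x1_poly_pCons x_poly_hom_simps is_ring_hom_0[OF is_ring_hom_hY] is_ring_hom_1[OF is_ring_hom_hY])
next
  case X2
  show ?case
    using has_normal_form_x_polys[of "[:0, 1:]" h 0]
    by (simp add: x2_poly_pCons x_poly_hom_simps is_ring_hom_0[OF is_ring_hom_hY] is_ring_hom_1[OF is_ring_hom_hY])
next
  case Yv
  show ?case
    using has_normal_form_x_polys[of 0 h "[:[:0, 1:]:]"]
    by (simp add: x1_poly_pCons x_poly_hom_simps hY_X)
next
  case Zv
  show ?case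
    unfolding has_normal_form_def
    by (rule exI[of _ 1], rule exI[of _ 1], rule exI[of _ 0]) (simp add: x_poly_hom_simps A_cong_generators(2))
qed (simp_all add: has_normal_form_add has_normal_form_mult)

section \<open>Evaluation on the torus\<close>

definition torus_eval :: "'a::field poly \<Rightarrow> 'a \<Rightarrow> 'a \<Rightarrow> 'a mpoly4 \<Rightarrow> 'a" where
  "torus_eval h a t = subst4 (\<lambda>x. x) a (poly h t / a) (1 / t) t"

definition poly2 :: "'a::comm_ring_1 poly poly \<Rightarrow> 'a \<Rightarrow> 'a \<Rightarrow> 'a" where
  "poly2 W a t = eval_poly (\<lambda>q. poly q t) a W"

lemma is_ring_hom_torus_eval: "is_ring_hom (torus_eval h a t)"
  unfolding torus_eval_def by (rule is_ring_hom_subst4[OF is_ring_hom_id])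

lemma is_ring_hom_poly: "is_ring_hom (\<lambda>q. poly q t)"
  by (simp add: is_ring_hom_def)

lemma is_ring_hom_poly2: "is_ring_hom (\<lambda>W. poly2 W a t)"
  unfolding poly2_def by (rule is_ring_hom_eval_poly[OF is_ring_hom_poly])

lemma torus_eval_simps:
  "torus_eval h a t X1 = a" "torus_eval h a t X2 = poly h t / a"
  "torus_eval h a t Zv = 1 / t" "torus_eval h a t Yv = t"
  "torus_eval h a t (const4 c) = c" "torus_eval h a t (hY p) = poly p t"
  unfolding torus_eval_def by (simp_all add: subst4_simps[OF is_ring_hom_id] eval_poly_id)

lemmas torus_eval_hom_simps =
  is_ring_hom_add[OF is_ring_hom_torus_eval] is_ring_hom_mult[OF is_ring_hom_torus_eval]
  is_ring_hom_diff[OF is_ring_hom_torus_eval] is_ring_hom_1[OF is_ring_hom_torus_eval]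
  is_ring_hom_0[OF is_ring_hom_torus_eval] is_ring_hom_pow[OF is_ring_hom_torus_eval]

lemma torus_eval_x1_poly: "torus_eval h a t (x1_poly A) = poly2 A a t"
  and torus_eval_x2_poly: "torus_eval h a t (x2_poly B) = poly2 B (poly h t / a) t"
proof -
  have "torus_eval h a t \<circ> hY = (\<lambda>q. poly q t)"
    by (rule ext) (simp add: torus_eval_simps)
  then show "torus_eval h a t (x1_poly A) = poly2 A a t"
    and "torus_eval h a t (x2_poly B) = poly2 B (poly h t / a) t"
    unfolding x1_poly_def x2_poly_def poly2_def
    by (simp_all add: eval_poly_comp[OF is_ring_hom_hY is_ring_hom_torus_eval] torus_eval_simps)
qed

lemma torus_eval_A_cong:
  assumes "a \<noteq> 0" "t \<noteq> 0" "A_cong h P Q"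
  shows "torus_eval h a t P = torus_eval h a t Q"
proof -
  obtain U V where "P - Q = U * (X1 * X2 - hY h) + V * (Yv * Zv - 1)"
    using assms(3) unfolding A_cong_def A_rels_def by blast
  then have "torus_eval h a t (P - Q) = 0"
    using assms(1,2) by (simp add: torus_eval_hom_simps torus_eval_simps)
  then show ?thesis by (simp add: torus_eval_hom_simps)
qed

lemma poly_eq_0_if_cofinite_roots:
  fixes p :: "'a::field_char_0 poly"
  assumes "finite S" "\<And>x. x \<notin> S \<Longrightarrow> poly p x = 0"
  shows "p = 0"
proof (rule ccontr)
  assume "p \<noteq> 0"
  then have "finite (S \<union> {x. poly p x = 0})"
    using assms(1) poly_roots_finite by blast
  moreover have "S \<union> {x. poly p x = 0} = UNIV"
    using assms(2) by auto
  ultimately show False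
    using infinite_UNIV_char_0 by auto
qed

lemma poly2_eq_0_if_vanishes_on_torus:
  fixes W :: "'a::field_char_0 poly poly"
  assumes "\<And>a t. a \<noteq> 0 \<Longrightarrow> t \<noteq> 0 \<Longrightarrow> poly2 W a t = 0"
  shows "W = 0"
proof (rule poly_eqI)
  fix i
  have "poly (coeff W i) t = 0" if t: "t \<noteq> 0" for t
  proof -
    have "map_poly (\<lambda>q. poly q t) W = 0"
      by (rule poly_eq_0_if_cofinite_roots[of "{0}"]) (use assms t in \<open>auto simp: poly2_def eval_poly_def\<close>)
    then show ?thesis
      by (metis coeff_0 coeff_map_poly poly_0)
  qed
  then have "coeff W i = 0"
    by (intro poly_eq_0_if_cofinite_roots[of "{0}"]) auto
  then show "coeff W i = coeff 0 i" by simp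
qed

lemma poly2_const: "poly2 [:q:] a t = poly q t"
  unfolding poly2_def eval_poly_pCons[OF is_ring_hom_poly] by (simp add: eval_poly_def)

lemma poly2_monom: "poly2 (monom q e) a t = poly q t * a ^ e"
  by (simp add: poly2_def eval_poly_monom[OF is_ring_hom_poly])

text \<open>Multiplying \<open>A(a, t) + B(h(t)/a, t)\<close> by \<open>a\<^sup>m\<close>, \<open>m \<ge> deg B\<close>, clears the denominators.\<close>

definition nf_numerator :: "'a::comm_ring_1 poly \<Rightarrow> nat \<Rightarrow> 'a poly poly \<Rightarrow> 'a poly poly \<Rightarrow> 'a poly poly" where
  "nf_numerator h m A B = monom 1 m * A + (\<Sum>j\<le>m. monom (coeff B j * h ^ j) (m - j))"

lemma poly2_nf_numerator:
  fixes h :: "'a::field poly"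
  assumes a: "a \<noteq> 0" and B: "degree B \<le> m"
  shows "poly2 (nf_numerator h m A B) a t = a ^ m * (poly2 A a t + poly2 B (poly h t / a) t)"
proof -
  have "a ^ m * poly2 B (poly h t / a) t = (\<Sum>j\<le>m. a ^ m * (poly (coeff B j) t * (poly h t / a) ^ j))"
    unfolding poly2_def eval_poly_as_sum[OF is_ring_hom_poly B] sum_distrib_left ..
  also have "\<dots> = (\<Sum>j\<le>m. poly (coeff B j) t * poly h t ^ j * a ^ (m - j))"
  proof (rule sum.cong)
    fix j assume "j \<in> {..m}"
    then have "a ^ m = a ^ j * a ^ (m - j)"
      by (simp add: power_add[symmetric])
    then show "a ^ m * (poly (coeff B j) t * (poly h t / a) ^ j) = poly (coeff B j) t * poly h t ^ j * a ^ (m - j)"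
      using a by (simp add: power_divide field_simps)
  qed simp
  finally show ?thesis
    unfolding nf_numerator_def is_ring_hom_add[OF is_ring_hom_poly2] is_ring_hom_mult[OF is_ring_hom_poly2]
      is_ring_hom_sum[OF is_ring_hom_poly2]
    by (simp add: poly2_monom poly_mult poly_power algebra_simps)
qed

lemma coeff_nf_numerator:
  "coeff (nf_numerator h m A B) i = (if m \<le> i then coeff A (i - m) else 0) +
     (if i \<le> m then coeff B (m - i) * h ^ (m - i) else 0)"
proof -
  have "coeff (\<Sum>j\<le>m. monom (coeff B j * h ^ j) (m - j)) i =
     (\<Sum>j\<le>m. if j = m - i \<and> i \<le> m then coeff B j * h ^ j else 0)"
    unfolding coeff_sum by (rule sum.cong) (auto simp: coeff_monom)
  also have "\<dots> = (if i \<le> m then coeff B (m - i) * h ^ (m - i) else 0)"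
    by (auto simp: sum.delta' if_distrib cong: if_cong)
  finally show ?thesis
    unfolding nf_numerator_def by (simp add: coeff_monom_mult not_le)
qed

lemma normal_form_eq_0:
  fixes h :: "'a::field_char_0 poly"
  assumes h: "h \<noteq> 0" and B0: "coeff B 0 = 0"
    and vanish: "\<And>a t. a \<noteq> 0 \<Longrightarrow> t \<noteq> 0 \<Longrightarrow> poly2 A a t + poly2 B (poly h t / a) t = 0"
  shows "A = 0" "B = 0"
proof -
  define m where "m = degree B"
  have "nf_numerator h m A B = 0"
    by (rule poly2_eq_0_if_vanishes_on_torus) (simp add: poly2_nf_numerator m_def vanish)
  then have c: "coeff (nf_numerator h m A B) i = 0" for i
    by simp
  show "A = 0"
  proof (rule poly_eqI)
    fix j
    show "coeff A j = coeff 0 j"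
      using c[of "j + m"] B0 by (cases j) (auto simp: coeff_nf_numerator)
  qed
  show "B = 0"
  proof (rule poly_eqI)
    fix j
    have "coeff B j = 0" if j: "0 < j" "j \<le> m"
    proof -
      have "\<not> m \<le> m - j" "m - (m - j) = j"
        using j by auto
      then have "coeff B j * h ^ j = 0"
        using c[of "m - j"] by (simp add: coeff_nf_numerator)
      then show ?thesis using h by simp
    qed
    then show "coeff B j = coeff 0 j"
      using B0 by (cases "j \<le> m") (auto simp: m_def coeff_eq_0 not_le)
  qed
qed

lemma A_rels_cancel_y_pow:
  assumes "Yv ^ n * P \<in> A_rels h"
  shows "P \<in> A_rels h"
proof -
  have "A_cong h (Zv ^ n * (Yv ^ n * P)) 0"
    using A_cong_mult_left[OF assms[folded A_cong_0_iff], of "Zv ^ n"] by simp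
  moreover have "A_cong h (Zv ^ n * (Yv ^ n * P)) P"
    using A_cong_mult[OF A_cong_pow[OF A_cong_generators(2)] A_cong_refl, of h n P]
    by (simp add: power_mult_distrib ac_simps)
  ultimately show ?thesis
    by (meson A_cong_0_iff A_cong_sym A_cong_trans)
qed

lemma A_rels_if_torus_eval_0:
  fixes h :: "'a::field_char_0 poly"
  assumes h: "h \<noteq> 0" and vanish: "\<And>a t. a \<noteq> 0 \<Longrightarrow> t \<noteq> 0 \<Longrightarrow> torus_eval h a t P = 0"
  shows "P \<in> A_rels h"
proof -
  obtain n A B where nf: "coeff B 0 = 0" "A_cong h (Yv ^ n * P) (x1_poly A + x2_poly B)"
    using normal_form[of h P] unfolding has_normal_form_def by blast
  have "poly2 A a t + poly2 B (poly h t / a) t = 0" if "a \<noteq> 0" "t \<noteq> 0" for a t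
    using torus_eval_A_cong[OF that nf(2)] vanish[OF that]
    by (simp add: torus_eval_hom_simps torus_eval_x1_poly torus_eval_x2_poly)
  then have "A = 0" "B = 0"
    using normal_form_eq_0[OF h nf(1)] by blast+
  then have "Yv ^ n * P \<in> A_rels h"
    using nf(2) by (simp add: A_cong_0_iff x_poly_hom_simps)
  then show ?thesis
    by (rule A_rels_cancel_y_pow)
qed

lemma A_cong_iff_torus_eval:
  fixes h :: "'a::field_char_0 poly"
  assumes "h \<noteq> 0"
  shows "A_cong h P Q \<longleftrightarrow> (\<forall>a t. a \<noteq> 0 \<longrightarrow> t \<noteq> 0 \<longrightarrow> torus_eval h a t P = torus_eval h a t Q)"
  using torus_eval_A_cong A_rels_if_torus_eval_0[OF assms, of "P - Q"]
  by (auto simp: A_cong_def torus_eval_hom_simps)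

section \<open>Isomorphisms induced by substitutions\<close>

lemma is_ring_hom_maps_A_rels:
  assumes T: "is_ring_hom T" and P: "P \<in> A_rels f"
    and rels: "T (X1 * X2 - hY f) \<in> A_rels g" "T (Yv * Zv - 1) \<in> A_rels g"
  shows "T P \<in> A_rels g"
proof -
  obtain U V where "P = U * (X1 * X2 - hY f) + V * (Yv * Zv - 1)"
    using P unfolding A_rels_def by blast
  then show ?thesis
    using rels by (simp add: is_ring_hom_add[OF T] is_ring_hom_mult[OF T] A_rels_add A_rels_mult)
qed

lemma A_cong_comp_if_generators:
  assumes T: "is_ring_hom T" and T': "is_ring_hom T'"
    and gens: "\<And>X. X \<in> {X1, X2, Yv, Zv} \<Longrightarrow> A_cong h (T' (T X)) X"
    and const: "\<And>c. T' (T (const4 c)) = const4 c"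
  shows "A_cong h (T' (T P)) P"
proof (induct P rule: mpoly4_induct)
  case (add P R)
  then show ?case by (simp add: is_ring_hom_add[OF T] is_ring_hom_add[OF T'] A_cong_add)
next
  case (mult P R)
  then show ?case by (simp add: is_ring_hom_mult[OF T] is_ring_hom_mult[OF T'] A_cong_mult)
qed (simp_all add: gens const A_cong_refl)

definition induced_map ::
    "'a::comm_ring_1 poly \<Rightarrow> 'a poly \<Rightarrow> ('a mpoly4 \<Rightarrow> 'a mpoly4) \<Rightarrow> 'a mpoly4 set \<Rightarrow> 'a mpoly4 set" where
  "induced_map f g T X = A_cls g (T (SOME P. X = A_cls f P))"

lemma induced_map_A_cls:
  assumes T: "is_ring_hom T" and rels: "\<And>P. P \<in> A_rels f \<Longrightarrow> T P \<in> A_rels g"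
  shows "induced_map f g T (A_cls f P) = A_cls g (T P)"
proof -
  define P' where "P' = (SOME P'. A_cls f P = A_cls f P')"
  have "A_cls f P = A_cls f P'"
    unfolding P'_def by (rule someI) (rule refl)
  then have "A_cong f P' P"
    by (simp add: A_cls_eq_iff A_cong_sym)
  then have "A_cong g (T P') (T P)"
    using rels unfolding A_cong_def by (simp add: is_ring_hom_diff[OF T, symmetric])
  then show ?thesis
    unfolding induced_map_def P'_def[symmetric] by (simp add: A_cls_eq_iff)
qed

lemma A_kalg_iso_if_inverse_homs:
  fixes f g :: "'a::comm_ring_1 poly"
  assumes T: "is_ring_hom T" and T': "is_ring_hom T'"
    and rels: "\<And>P. P \<in> A_rels f \<Longrightarrow> T P \<in> A_rels g"
    and rels': "\<And>Q. Q \<in> A_rels g \<Longrightarrow> T' Q \<in> A_rels f"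
    and inv: "\<And>P. A_cong f (T' (T P)) P" and inv': "\<And>Q. A_cong g (T (T' Q)) Q"
    and const: "\<And>c. T (const4 c) = const4 c"
  shows "A_kalg_iso f g"
proof -
  let ?\<phi> = "induced_map f g T"
  have \<phi>: "?\<phi> (A_cls f P) = A_cls g (T P)" for P
    by (rule induced_map_A_cls[OF T rels])
  have "inj_on ?\<phi> (carrier (A_alg f))"
  proof (rule inj_onI)
    fix x y assume "x \<in> carrier (A_alg f)" "y \<in> carrier (A_alg f)" and eq: "?\<phi> x = ?\<phi> y"
    then obtain P Q where xy: "x = A_cls f P" "y = A_cls f Q"
      by (auto simp: A_alg_carrier)
    then have "T P - T Q \<in> A_rels g"
      using eq by (simp add: \<phi> A_cls_eq_iff A_cong_def)
    then have "A_cong f (T' (T P)) (T' (T Q))"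
      using rels'[of "T P - T Q"] by (simp add: A_cong_def is_ring_hom_diff[OF T'])
    then show "x = y"
      unfolding xy A_cls_eq_iff by (meson inv A_cong_sym A_cong_trans)
  qed
  moreover have "?\<phi> ` carrier (A_alg f) = carrier (A_alg g)"
  proof -
    have "A_cls g Q \<in> ?\<phi> ` range (A_cls f)" for Q
    proof -
      have "A_cls g Q = ?\<phi> (A_cls f (T' Q))"
        using inv'[of Q] by (simp add: \<phi> A_cls_eq_iff A_cong_sym)
      then show ?thesis by blast
    qed
    then show ?thesis
      by (auto simp: A_alg_carrier \<phi>)
  qed
  ultimately have "?\<phi> \<in> ring_iso (A_alg f) (A_alg g)"
    by (intro ring_iso_memI bij_betw_imageI)
      (auto simp: A_alg_carrier \<phi> A_alg_mult A_alg_add A_alg_one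
        is_ring_hom_mult[OF T] is_ring_hom_add[OF T] is_ring_hom_1[OF T])
  moreover have "A_kalg_hom f g ?\<phi>"
    using calculation \<phi> const by (simp add: A_kalg_hom_def ring_iso_def)
  ultimately show ?thesis
    unfolding A_kalg_iso_iff by blast
qed

lemma A_kalg_iso_if_inverse_substs:
  fixes f g :: "'a::comm_ring_1 poly" and e1 e2 e3 e4 e1' e2' e3' e4' :: "'a mpoly4"
  defines "T \<equiv> subst4 const4 e1 e2 e3 e4" and "T' \<equiv> subst4 const4 e1' e2' e3' e4'"
  assumes rels: "T (X1 * X2 - hY f) \<in> A_rels g" "T (Yv * Zv - 1) \<in> A_rels g"
    and rels': "T' (X1 * X2 - hY g) \<in> A_rels f" "T' (Yv * Zv - 1) \<in> A_rels f"
    and inv: "\<And>X. X \<in> {X1, X2, Yv, Zv} \<Longrightarrow> A_cong f (T' (T X)) X"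
    and inv': "\<And>X. X \<in> {X1, X2, Yv, Zv} \<Longrightarrow> A_cong g (T (T' X)) X"
  shows "A_kalg_iso f g"
proof -
  have homs: "is_ring_hom T" "is_ring_hom T'"
    unfolding T_def T'_def by (simp_all add: is_ring_hom_subst4 is_ring_hom_const4)
  have const: "T (const4 c) = const4 c" "T' (const4 c) = const4 c" for c
    unfolding T_def T'_def by (simp_all add: subst4_simps[OF is_ring_hom_const4])
  show ?thesis
  proof (rule A_kalg_iso_if_inverse_homs[OF homs])
    show "P \<in> A_rels f \<Longrightarrow> T P \<in> A_rels g" for P
      by (rule is_ring_hom_maps_A_rels[OF homs(1) _ rels])
    show "Q \<in> A_rels g \<Longrightarrow> T' Q \<in> A_rels f" for Q
      by (rule is_ring_hom_maps_A_rels[OF homs(2) _ rels'])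
    show "A_cong f (T' (T P)) P" for P
      by (rule A_cong_comp_if_generators[OF homs inv]) (simp_all add: const)
    show "A_cong g (T (T' Q)) Q" for Q
      by (rule A_cong_comp_if_generators[OF homs(2,1) inv']) (simp_all add: const)
  qed (rule const)
qed

lemma torus_eval_comp_const4: "torus_eval h a t \<circ> const4 = (\<lambda>x. x)"
  by (rule ext) (simp add: torus_eval_simps)

lemma torus_eval_subst4:
  "torus_eval h a t (subst4 const4 e1 e2 e3 e4 P) =
    subst4 (\<lambda>x. x) (torus_eval h a t e1) (torus_eval h a t e2) (torus_eval h a t e3) (torus_eval h a t e4) P"
  by (simp add: subst4_comp[OF is_ring_hom_const4 is_ring_hom_torus_eval] torus_eval_comp_const4)

lemma torus_eval_eval_poly_const4: "torus_eval h a t (eval_poly const4 e p) = poly p (torus_eval h a t e)"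
  using eval_poly_comp[OF is_ring_hom_const4 is_ring_hom_torus_eval, where x = e and p = p]
  by (simp add: torus_eval_comp_const4 eval_poly_id)

lemmas subst_torus_simps = torus_eval_subst4 torus_eval_eval_poly_const4 torus_eval_simps
  torus_eval_hom_simps eval_poly_id subst4_simps[OF is_ring_hom_id] subst4_simps[OF is_ring_hom_const4]
  is_ring_hom_add[OF is_ring_hom_subst4[OF is_ring_hom_id]]
  is_ring_hom_mult[OF is_ring_hom_subst4[OF is_ring_hom_id]]
  is_ring_hom_diff[OF is_ring_hom_subst4[OF is_ring_hom_id]]
  is_ring_hom_1[OF is_ring_hom_subst4[OF is_ring_hom_id]]
  is_ring_hom_pow[OF is_ring_hom_subst4[OF is_ring_hom_id]]
  is_ring_hom_add[OF is_ring_hom_subst4[OF is_ring_hom_const4]]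
  is_ring_hom_mult[OF is_ring_hom_subst4[OF is_ring_hom_const4]]
  is_ring_hom_diff[OF is_ring_hom_subst4[OF is_ring_hom_const4]]
  is_ring_hom_1[OF is_ring_hom_subst4[OF is_ring_hom_const4]]
  is_ring_hom_pow[OF is_ring_hom_subst4[OF is_ring_hom_const4]]

lemma A_kalg_iso_if_scaled:
  fixes f g :: "'a::field_char_0 poly"
  assumes f: "f \<noteq> 0" and g: "g \<noteq> 0" and lam: "lam \<noteq> 0" and c: "c \<noteq> 0"
    and fg: "\<And>y. poly g y = lam * poly f (c * y)"
  shows "A_kalg_iso f g"
proof (rule A_kalg_iso_if_inverse_substs)
  let ?T = "subst4 const4 (const4 (1 / lam) * X1) X2 (const4 (1 / c) * Zv) (const4 c * Yv)"
  let ?T' = "subst4 const4 (const4 lam * X1) X2 (const4 c * Zv) (const4 (1 / c) * Yv)"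
  show "?T (X1 * X2 - hY f) \<in> A_rels g" "?T (Yv * Zv - 1) \<in> A_rels g"
    by (rule A_rels_if_torus_eval_0[OF g]; simp add: subst_torus_simps fg lam c)+
  show "?T' (X1 * X2 - hY g) \<in> A_rels f" "?T' (Yv * Zv - 1) \<in> A_rels f"
    by (rule A_rels_if_torus_eval_0[OF f]; simp add: subst_torus_simps fg lam c)+
  show "A_cong f (?T' (?T X)) X" "A_cong g (?T (?T' X)) X" if "X \<in> {X1, X2, Yv, Zv}" for X
    using that by (auto simp: A_cong_iff_torus_eval f g subst_torus_simps lam c)
qed

lemma A_kalg_iso_if_reflected:
  fixes f g :: "'a::field_char_0 poly"
  assumes f: "f \<noteq> 0" and g: "g \<noteq> 0" and lam: "lam \<noteq> 0" and c: "c \<noteq> 0"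
    and fg: "\<And>y. y \<noteq> 0 \<Longrightarrow> poly g y = lam * y ^ s * poly f (c / y)"
  shows "A_kalg_iso f g"
proof (rule A_kalg_iso_if_inverse_substs)
  let ?T = "subst4 const4 (const4 (1 / lam) * Zv ^ s * X1) X2 (const4 (1 / c) * Yv) (const4 c * Zv)"
  let ?T' = "subst4 const4 (const4 (lam * c ^ s) * Zv ^ s * X1) X2 (const4 (1 / c) * Yv) (const4 c * Zv)"
  show "?T (X1 * X2 - hY f) \<in> A_rels g"
  proof (rule A_rels_if_torus_eval_0[OF g])
    fix a t :: 'a assume "a \<noteq> 0" "t \<noteq> 0"
    then show "torus_eval g a t (?T (X1 * X2 - hY f)) = 0"
      using fg[of t] lam by (simp add: subst_torus_simps power_divide field_simps)
  qed
  show "?T' (X1 * X2 - hY g) \<in> A_rels f"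
  proof (rule A_rels_if_torus_eval_0[OF f])
    fix a t :: 'a assume "a \<noteq> 0" "t \<noteq> 0"
    then show "torus_eval f a t (?T' (X1 * X2 - hY g)) = 0"
      using fg[of "c / t"] lam c by (simp add: subst_torus_simps power_divide field_simps)
  qed
  show "?T (Yv * Zv - 1) \<in> A_rels g" "?T' (Yv * Zv - 1) \<in> A_rels f"
    by (rule A_rels_if_torus_eval_0[OF g] A_rels_if_torus_eval_0[OF f]; simp add: subst_torus_simps c)+
  show "A_cong f (?T' (?T X)) X" "A_cong g (?T (?T' X)) X" if "X \<in> {X1, X2, Yv, Zv}" for X
    using that by (auto simp: A_cong_iff_torus_eval f g subst_torus_simps lam c power_divide field_simps)
qed

lemma poly_split_monom:
  fixes p :: "'b::idom poly"
  assumes "p \<noteq> 0"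
  obtains k p1 where "p = monom 1 k * p1" "coeff p1 0 \<noteq> 0"
proof -
  obtain q where q: "p = [:- 0, 1:] ^ Polynomial.order 0 p * q" "\<not> [:- 0, 1:] dvd q"
    using Polynomial.order_decomp[OF assms, of 0] by blast
  have "coeff q 0 \<noteq> 0"
    using q(2) poly_eq_0_iff_dvd[of q 0] by (simp add: poly_0_coeff_0)
  then show ?thesis
    using q(1) that by (simp add: monom_altdef)
qed

lemma factor_of_monom:
  fixes p q :: "'b::idom poly"
  assumes pq: "p * q = monom C M" and C: "C \<noteq> 0"
  obtains e where "p = monom (coeff p e) e" "coeff p e \<noteq> 0"
proof -
  have "p \<noteq> 0" "q \<noteq> 0"
    using pq C by auto
  then obtain k p1 l q1 where p1: "p = monom 1 k * p1" "coeff p1 0 \<noteq> 0"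
    and q1: "q = monom 1 l * q1" "coeff q1 0 \<noteq> 0"
    by (metis poly_split_monom)
  have eq: "monom 1 (k + l) * (p1 * q1) = monom C M"
  proof -
    have "p * q = (monom 1 k * monom 1 l) * (p1 * q1)"
      unfolding p1(1) q1(1) by (simp add: ac_simps)
    then show ?thesis
      using pq by (simp add: mult_monom)
  qed
  have "coeff (monom 1 (k + l) * (p1 * q1)) (k + l) = coeff p1 0 * coeff q1 0"
    by (simp only: coeff_monom_mult) (simp add: coeff_mult)
  then have "coeff (monom C M) (k + l) \<noteq> 0"
    using eq p1(2) q1(2) by simp
  then have M: "M = k + l"
    by (simp add: coeff_monom split: if_splits)
  have "monom 1 M * [:C:] = monom C M"
    using mult_monom[of 1 M C 0] by (simp add: monom_0)
  then have "monom 1 M * (p1 * q1) = monom 1 M * [:C:]"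
    using eq M by simp
  moreover have "monom 1 M \<noteq> (0 :: 'b poly)"
    by simp
  ultimately have "p1 * q1 = [:C:]"
    using mult_left_cancel by blast
  moreover have "p1 \<noteq> 0" "q1 \<noteq> 0"
    using p1(2) q1(2) by auto
  ultimately have "degree p1 = 0"
    using degree_mult_eq[of p1 q1] by simp
  then have "p1 = [:coeff p1 0:]"
    by (rule degree_0_id[symmetric])
  then have "p = monom (coeff p1 0) k"
    using p1(1) mult_monom[of 1 k "coeff p1 0" 0] by (simp add: monom_0)
  then show ?thesis
    using p1(2) that[of k] by simp
qed

lemma dvd_cancel_x_power:
  fixes g R :: "'b::idom poly"
  assumes g0: "coeff g 0 \<noteq> 0" and dvd: "g dvd [:0, 1:] ^ N * R"
  shows "g dvd R"
  using dvd
proof (induct N arbitrary: R)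
  case (Suc N)
  obtain q where "[:0, 1:] ^ Suc N * R = g * q"
    using Suc(2) by (elim dvdE)
  then have q: "[:0, 1:] * ([:0, 1:] ^ N * R) = g * q"
    by (simp only: power_Suc mult.assoc)
  have "coeff g 0 * coeff q 0 = 0"
    using arg_cong[OF q, of "\<lambda>p. coeff p 0"] by (simp add: coeff_mult)
  then obtain q' where "q = pCons 0 q'"
    using g0 by (metis coeff_pCons_0 mult_eq_0_iff pCons_cases)
  then have "[:0, 1:] ^ N * R = g * q'"
    using q by (simp add: mult.left_commute)
  then show ?case
    using Suc(1) by simp
qed simp

lemma dvd_x_power_imp_monom:
  fixes C :: "'a::field poly"
  assumes "C dvd [:0, 1:] ^ N" "C \<noteq> 0"
  obtains c j where "c \<noteq> 0" "C = monom c j"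
proof -
  obtain k C1 where C1: "C = monom 1 k * C1" "coeff C1 0 \<noteq> 0"
    using poly_split_monom[OF assms(2)] by blast
  have "C1 dvd [:0, 1:] ^ N * 1"
    using assms(1) C1(1) by (metis dvd_mult_right mult.right_neutral)
  then have "C1 dvd 1"
    by (rule dvd_cancel_x_power[OF C1(2)])
  then obtain c where c: "C1 = [:c:]" "c dvd 1"
    by (auto simp: is_unit_poly_iff)
  then have "c \<noteq> 0"
    by auto
  moreover have "C = monom c k"
    using C1(1) c(1) by (simp add: monom_0[symmetric] mult_monom)
  ultimately show ?thesis
    by (rule that)
qed

lemma dvd_same_degree:
  fixes g R :: "'a::field poly"
  assumes "g dvd R" "R \<noteq> 0" "degree R = degree g"
  obtains l where "l \<noteq> 0" "R = smult l g"
proof -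
  obtain q where q: "R = g * q"
    using assms(1) by (auto elim: dvdE)
  then have "g \<noteq> 0" "q \<noteq> 0"
    using assms(2) by auto
  then have "degree q = 0"
    using q assms(3) degree_mult_eq[of g q] by simp
  then obtain l where "q = [:l:]"
    by (metis degree_0_id)
  then show ?thesis
    using q \<open>q \<noteq> 0\<close> that by (simp add: mult.commute)
qed

definition A_eval :: "'a::field poly \<Rightarrow> 'a mpoly4 set \<Rightarrow> 'a \<Rightarrow> 'a \<Rightarrow> 'a" where
  "A_eval h X a t = torus_eval h a t (SOME P. X = A_cls h P)"

lemma A_eval_A_cls:
  assumes "a \<noteq> 0" "t \<noteq> 0"
  shows "A_eval h (A_cls h P) a t = torus_eval h a t P"
proof -
  define P' where "P' = (SOME P'. A_cls h P = A_cls h P')"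
  have "A_cls h P = A_cls h P'"
    unfolding P'_def by (rule someI) (rule refl)
  then show ?thesis
    unfolding A_eval_def P'_def[symmetric] using torus_eval_A_cong[OF assms] by (simp add: A_cls_eq_iff)
qed

lemma A_eval_mult:
  assumes "X \<in> carrier (A_alg h)" "Y \<in> carrier (A_alg h)" "a \<noteq> 0" "t \<noteq> 0"
  shows "A_eval h (X \<otimes>\<^bsub>A_alg h\<^esub> Y) a t = A_eval h X a t * A_eval h Y a t"
  using assms by (auto simp: A_alg_carrier A_alg_mult A_eval_A_cls torus_eval_hom_simps)

lemma A_eval_add:
  assumes "X \<in> carrier (A_alg h)" "Y \<in> carrier (A_alg h)" "a \<noteq> 0" "t \<noteq> 0"
  shows "A_eval h (X \<oplus>\<^bsub>A_alg h\<^esub> Y) a t = A_eval h X a t + A_eval h Y a t"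
  using assms by (auto simp: A_alg_carrier A_alg_add A_eval_A_cls torus_eval_hom_simps)

lemma A_eval_one: "a \<noteq> 0 \<Longrightarrow> t \<noteq> 0 \<Longrightarrow> A_eval h \<one>\<^bsub>A_alg h\<^esub> a t = 1"
  by (simp add: A_alg_one A_eval_A_cls torus_eval_hom_simps)

lemma A_eval_eqI:
  fixes h :: "'a::field_char_0 poly"
  assumes h: "h \<noteq> 0" and X: "X \<in> carrier (A_alg h)" and Y: "Y \<in> carrier (A_alg h)"
    and eq: "\<And>a t. a \<noteq> 0 \<Longrightarrow> t \<noteq> 0 \<Longrightarrow> A_eval h X a t = A_eval h Y a t"
  shows "X = Y"
proof -
  obtain P Q where PQ: "X = A_cls h P" "Y = A_cls h Q"
    using X Y by (auto simp: A_alg_carrier)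
  then show ?thesis
    using eq by (simp add: A_cls_eq_iff A_cong_iff_torus_eval[OF h] A_eval_A_cls)
qed

text \<open>The coefficients of the numerator below \<open>a\<^sup>m\<close> come from the \<open>x2\<close>-part, where \<open>x2 = h(t)/a\<close>.\<close>

lemma torus_eval_numerator:
  fixes h :: "'a::field poly"
  obtains W m n where "\<And>a t. a \<noteq> 0 \<Longrightarrow> t \<noteq> 0 \<Longrightarrow> poly2 W a t = a ^ m * (t ^ n * torus_eval h a t P)"
    and "\<And>e. e < m \<Longrightarrow> h dvd coeff W e"
proof -
  obtain n A B where nf: "A_cong h (Yv ^ n * P) (x1_poly A + x2_poly B)"
    using normal_form[of h P] unfolding has_normal_form_def by blast
  define m where "m = degree B"
  show ?thesis
  proof (rule that[of "nf_numerator h m A B" m n])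
    fix a t :: 'a assume at: "a \<noteq> 0" "t \<noteq> 0"
    have "t ^ n * torus_eval h a t P = poly2 A a t + poly2 B (poly h t / a) t"
      using torus_eval_A_cong[OF at nf]
      by (simp add: torus_eval_hom_simps torus_eval_simps torus_eval_x1_poly torus_eval_x2_poly)
    then show "poly2 (nf_numerator h m A B) a t = a ^ m * (t ^ n * torus_eval h a t P)"
      using poly2_nf_numerator[OF at(1), of B m] by (simp add: m_def)
  next
    fix e assume "e < m"
    then have "h dvd h ^ (m - e)"
      by (simp add: dvd_power)
    then show "h dvd coeff (nf_numerator h m A B) e"
      using \<open>e < m\<close> by (simp add: coeff_nf_numerator)
  qed
qed

lemma numerators_product_monom:
  fixes W W' :: "'a::field_char_0 poly poly" and u v :: "'a \<Rightarrow> 'a \<Rightarrow> 'a"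
  assumes W: "\<And>a t. a \<noteq> 0 \<Longrightarrow> t \<noteq> 0 \<Longrightarrow> poly2 W a t = a ^ m * (t ^ n * u a t)"
    and W': "\<And>a t. a \<noteq> 0 \<Longrightarrow> t \<noteq> 0 \<Longrightarrow> poly2 W' a t = a ^ m' * (t ^ n' * v a t)"
    and uv: "\<And>a t. a \<noteq> 0 \<Longrightarrow> t \<noteq> 0 \<Longrightarrow> t ^ N * (u a t * v a t) = poly R t"
  shows "W * W' * [:[:0, 1:] ^ N:] = monom ([:0, 1:] ^ (n + n') * R) (m + m')"
proof -
  have "poly2 (W * W' * [:[:0, 1:] ^ N:]) a t = poly2 (monom ([:0, 1:] ^ (n + n') * R) (m + m')) a t"
    if at: "a \<noteq> 0" "t \<noteq> 0" for a t
  proof -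
    have "poly2 (W * W' * [:[:0, 1:] ^ N:]) a t = poly2 W a t * poly2 W' a t * t ^ N"
      by (simp only: is_ring_hom_mult[OF is_ring_hom_poly2] poly2_const) (simp add: poly_power)
    also have "\<dots> = a ^ (m + m') * t ^ (n + n') * (t ^ N * (u a t * v a t))"
      using W[OF at] W'[OF at] by (simp add: power_add ac_simps)
    also have "\<dots> = poly2 (monom ([:0, 1:] ^ (n + n') * R) (m + m')) a t"
      using uv[OF at] by (simp add: poly2_monom poly_power ac_simps)
    finally show ?thesis .
  qed
  then show ?thesis
    using poly2_eq_0_if_vanishes_on_torus[of "W * W' * [:[:0, 1:] ^ N:] - monom ([:0, 1:] ^ (n + n') * R) (m + m')"]
    by (simp add: is_ring_hom_diff[OF is_ring_hom_poly2])
qed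

lemma eval_if_numerator_monom:
  fixes W :: "'a::field poly poly" and u :: "'a \<Rightarrow> 'a \<Rightarrow> 'a"
  assumes W: "\<And>a t. a \<noteq> 0 \<Longrightarrow> t \<noteq> 0 \<Longrightarrow> poly2 W a t = a ^ m * (t ^ n * u a t)"
    and monom: "W = monom C m" and at: "a \<noteq> 0" "t \<noteq> 0"
  shows "u a t = poly C t / t ^ n"
proof -
  have "poly C t * a ^ m = a ^ m * (t ^ n * u a t)"
    using W[OF at] by (simp add: monom poly2_monom)
  then show ?thesis
    using at by (simp add: field_simps)
qed

text \<open>If the product of two elements is a Laurent polynomial \<open>R(t) / t\<^sup>N\<close>, their numerators are
  monomials in \<open>a\<close>. Either both have exactly the \<open>a\<close>-degree of their denominators, so that they
  are Laurent polynomials in \<open>t\<close> alone, or one of them has a coefficient divisible by \<open>h\<close>.\<close>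

lemma torus_eval_product_dichotomy [consumes 2, case_names divides laurent]:
  fixes h R :: "'a::field_char_0 poly"
  assumes R: "R \<noteq> 0"
    and PQ: "\<forall>a t. a \<noteq> 0 \<longrightarrow> t \<noteq> 0 \<longrightarrow> t ^ N * (torus_eval h a t P * torus_eval h a t Q) = poly R t"
  obtains M where "h dvd [:0, 1:] ^ M * R"
  | C1 C2 n1 n2 where "C1 \<noteq> 0" "C1 * C2 * [:0, 1:] ^ N = [:0, 1:] ^ (n1 + n2) * R"
      "\<And>a t. a \<noteq> 0 \<Longrightarrow> t \<noteq> 0 \<Longrightarrow> torus_eval h a t P = poly C1 t / t ^ n1"
      "\<And>a t. a \<noteq> 0 \<Longrightarrow> t \<noteq> 0 \<Longrightarrow> torus_eval h a t Q = poly C2 t / t ^ n2"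
proof -
  obtain W m n where W: "\<And>a t. a \<noteq> 0 \<Longrightarrow> t \<noteq> 0 \<Longrightarrow> poly2 W a t = a ^ m * (t ^ n * torus_eval h a t P)"
    and Wdvd: "\<And>e. e < m \<Longrightarrow> h dvd coeff W e"
    using torus_eval_numerator[where h = h and P = P] by blast
  obtain W' m' n' where W': "\<And>a t. a \<noteq> 0 \<Longrightarrow> t \<noteq> 0 \<Longrightarrow> poly2 W' a t = a ^ m' * (t ^ n' * torus_eval h a t Q)"
    and W'dvd: "\<And>e. e < m' \<Longrightarrow> h dvd coeff W' e"
    using torus_eval_numerator[where h = h and P = Q] by blast
  define C where "C = [:0, 1:] ^ (n + n') * R"
  have C0: "C \<noteq> 0"
    using R by (simp add: C_def)
  have key: "W * W' * [:[:0, 1:] ^ N:] = monom C (m + m')"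
    unfolding C_def using PQ by (intro numerators_product_monom[OF W W']) auto
  obtain e1 where e1: "W = monom (coeff W e1) e1" "coeff W e1 \<noteq> 0"
    using factor_of_monom[OF _ C0, of W "W' * [:[:0, 1:] ^ N:]"] key by (auto simp: ac_simps)
  obtain e2 where e2: "W' = monom (coeff W' e2) e2" "coeff W' e2 \<noteq> 0"
    using factor_of_monom[OF _ C0, of W' "W * [:[:0, 1:] ^ N:]"] key by (auto simp: ac_simps)
  define C1 C2 where "C1 = coeff W e1" and "C2 = coeff W' e2"
  have "monom (C1 * C2 * [:0, 1:] ^ N) (e1 + e2) = monom C (m + m')"
    using key unfolding C1_def C2_def
    by (subst (asm) e1(1), subst (asm) e2(1)) (simp add: mult_monom monom_0[symmetric] mult.assoc del: monom_0)
  then have eqs: "C1 * C2 * [:0, 1:] ^ N = C" "e1 + e2 = m + m'"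
    using C0 by (simp_all add: monom_eq_iff') (metis mult_eq_0_iff power_eq_0_iff)
  show ?thesis
  proof (cases "e1 < m \<or> e2 < m'")
    case True
    then have "h dvd C1 \<or> h dvd C2"
      using Wdvd W'dvd by (auto simp: C1_def C2_def)
    moreover have "C1 dvd C" "C2 dvd C"
      using eqs(1) by (metis dvd_triv_left mult.assoc, metis dvd_triv_left mult.assoc mult.commute)
    ultimately have "h dvd C"
      by (meson dvd_trans)
    then show ?thesis
      using that(1) unfolding C_def by blast
  next
    case False
    then have em: "e1 = m" "e2 = m'"
      using eqs(2) by auto
    have PQ_eval: "torus_eval h a t P = poly C1 t / t ^ n" "torus_eval h a t Q = poly C2 t / t ^ n'"
      if "a \<noteq> 0" "t \<noteq> 0" for a t
      using e1(1) e2(1) em that unfolding C1_def C2_def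
      by (metis eval_if_numerator_monom[OF W] eval_if_numerator_monom[OF W'])+
    have "C1 \<noteq> 0" "C1 * C2 * [:0, 1:] ^ N = [:0, 1:] ^ (n + n') * R"
      using e1(2) eqs(1) by (simp_all add: C1_def C_def)
    then show ?thesis
      using PQ_eval by (rule that(2))
  qed
qed

section \<open>Units of \<open>A_h\<close>\<close>

definition y_powi :: "int \<Rightarrow> 'a::comm_ring_1 mpoly4" where
  "y_powi k = (if 0 \<le> k then Yv ^ nat k else Zv ^ nat (- k))"

lemma subst4_y_powi:
  fixes e4 :: "'a::field"
  shows "subst4 (\<lambda>x. x) e1 e2 (1 / e4) e4 (y_powi k) = e4 powi k"
  by (simp add: y_powi_def is_ring_hom_pow[OF is_ring_hom_subst4[OF is_ring_hom_id]]
      subst4_simps[OF is_ring_hom_id] power_int_def power_one_over power_inverse divide_inverse)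

lemma torus_eval_y_powi: "torus_eval h a t (y_powi k) = t powi k"
  unfolding torus_eval_def by (rule subst4_y_powi)

lemma A_unit_eval:
  fixes h :: "'a::field_char_0 poly"
  assumes h: "degree h \<ge> 1" "coeff h 0 \<noteq> 0"
    and X: "X \<in> carrier (A_alg h)" and Y: "Y \<in> carrier (A_alg h)"
    and XY: "X \<otimes>\<^bsub>A_alg h\<^esub> Y = \<one>\<^bsub>A_alg h\<^esub>"
  obtains c k where "c \<noteq> 0" "\<And>a t. a \<noteq> 0 \<Longrightarrow> t \<noteq> 0 \<Longrightarrow> A_eval h X a t = c * t powi k"
proof -
  obtain P Q where PQ: "X = A_cls h P" "Y = A_cls h Q"
    using X Y by (auto simp: A_alg_carrier)
  have "\<forall>a t. a \<noteq> 0 \<longrightarrow> t \<noteq> 0 \<longrightarrow> t ^ 0 * (torus_eval h a t P * torus_eval h a t Q) = poly 1 t"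
    using A_eval_mult[OF X Y] XY A_eval_one[of _ _ h] by (simp add: PQ A_eval_A_cls)
  with one_neq_zero show ?thesis
  proof (cases rule: torus_eval_product_dichotomy)
    case (divides M)
    then have "h dvd 1"
      using dvd_cancel_x_power[OF h(2), of M 1] by simp
    then show ?thesis
      using h(1) by (auto simp: is_unit_poly_iff)
  next
    case (laurent C1 C2 n1 n2)
    have "C1 dvd [:0, 1:] ^ (n1 + n2)"
      using laurent(2) by (metis dvd_triv_left mult.right_neutral power_0)
    then obtain c j where "c \<noteq> 0" "C1 = monom c j"
      using dvd_x_power_imp_monom laurent(1) by blast
    then show ?thesis
      using that[of c "int j - int n1"] laurent(3) by (simp add: PQ A_eval_A_cls poly_monom power_int_diff)
  qed
qed

lemma two_powi_eq_1:
  assumes "(2::'a::field_char_0) powi j = 1"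
  shows "j = 0"
proof (cases "j \<ge> 0")
  case True
  then obtain n where n: "j = int n"
    by (metis nonneg_int_cases)
  then have "of_nat (2 ^ n) = (of_nat 1 :: 'a)"
    using assms by simp
  then show ?thesis
    using n by (simp only: of_nat_eq_iff) simp
next
  case False
  then obtain n where n: "j = - int n"
    by (metis nle_le nonpos_int_cases)
  then have "inverse ((2::'a) ^ n) = 1"
    using assms by (simp add: power_int_minus)
  then have "of_nat (2 ^ n) = (of_nat 1 :: 'a)"
    by (metis inverse_1 inverse_inverse_eq of_nat_1 of_nat_numeral of_nat_power)
  then show ?thesis
    using n False by (simp only: of_nat_eq_iff) simp
qed

lemma powi_exponent_eq_1:
  fixes c c' :: "'a::field_char_0"
  assumes c: "c \<noteq> 0" and c': "c' \<noteq> 0"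
    and id: "\<And>t. t \<noteq> 0 \<Longrightarrow> c * (c' * t powi k') powi k = t"
  shows "k * k' = 1"
proof -
  have e: "c * c' powi k * t powi (k' * k) = t" if "t \<noteq> 0" for t
    using id[OF that] by (simp add: power_int_mult_distrib power_int_mult[symmetric] mult.assoc)
  then have "c * c' powi k = 1"
    using e[of 1] by simp
  then have "(2::'a) powi (k' * k) = 2 powi 1"
    using e[of 2] by simp
  then have "(2::'a) powi (k' * k - 1) = 1"
    by (simp add: power_int_diff)
  then have "k' * k - 1 = 0"
    by (rule two_powi_eq_1)
  then show ?thesis
    by (simp add: mult.commute)
qed

lemma A_kalg_hom_closed: "A_kalg_hom f g \<phi> \<Longrightarrow> \<phi> (A_cls f P) \<in> carrier (A_alg g)"
  using ring_hom_closed[of \<phi> "A_alg f" "A_alg g" "A_cls f P"] by (auto simp: A_kalg_hom_def A_alg_carrier)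

lemma A_kalg_hom_inv:
  assumes iso: "\<phi> \<in> ring_iso (A_alg f) (A_alg g)" and \<phi>: "A_kalg_hom f g \<phi>"
  shows "A_kalg_hom g f (inv_into (carrier (A_alg f)) \<phi>)"
proof -
  have "inv_into (carrier (A_alg f)) \<phi> \<in> ring_iso (A_alg g) (A_alg f)"
    by (rule ring_iso_set_sym[OF ring_A_alg iso])
  moreover have "inv_into (carrier (A_alg f)) \<phi> (A_cls g (const4 c)) = A_cls f (const4 c)" for c
  proof -
    have "inj_on \<phi> (carrier (A_alg f))"
      using iso by (simp add: ring_iso_def bij_betw_def)
    moreover have "\<phi> (A_cls f (const4 c)) = A_cls g (const4 c)"
      using \<phi> by (simp add: A_kalg_hom_def)
    ultimately show ?thesis
      using inv_into_f_f[of \<phi> "carrier (A_alg f)" "A_cls f (const4 c)"] by (simp add: A_alg_carrier)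
  qed
  ultimately show ?thesis
    by (simp add: A_kalg_hom_def ring_iso_def)
qed

lemma A_kalg_hom_Yv_Zv:
  assumes \<phi>: "A_kalg_hom f g \<phi>"
  shows "\<phi> (A_cls f Yv) \<otimes>\<^bsub>A_alg g\<^esub> \<phi> (A_cls f Zv) = \<one>\<^bsub>A_alg g\<^esub>"
proof -
  have hom: "\<phi> \<in> ring_hom (A_alg f) (A_alg g)"
    using \<phi> by (simp add: A_kalg_hom_def)
  have "\<phi> (A_cls f Yv) \<otimes>\<^bsub>A_alg g\<^esub> \<phi> (A_cls f Zv) = \<phi> (A_cls f (Yv * Zv))"
    using ring_hom_mult[OF hom, of "A_cls f Yv" "A_cls f Zv"] by (simp add: A_alg_carrier A_alg_mult)
  also have "A_cls f (Yv * Zv) = \<one>\<^bsub>A_alg f\<^esub>"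
    using A_cong_generators(2) by (simp add: A_alg_one A_cls_eq_iff)
  finally show ?thesis
    using ring_hom_one[OF hom] by simp
qed

lemma A_kalg_hom_eval:
  fixes f g :: "'a::field poly"
  assumes \<phi>: "A_kalg_hom f g \<phi>" and a: "a \<noteq> 0" and t: "t \<noteq> 0"
  defines "E X \<equiv> A_eval g (\<phi> (A_cls f X)) a t"
  shows "E P = subst4 (\<lambda>x. x) (E X1) (E X2) (E Zv) (E Yv) P"
proof (induct P rule: mpoly4_induct)
  case (const c)
  then show ?case
    using \<phi> a t by (simp add: E_def A_kalg_hom_def A_eval_A_cls subst4_simps[OF is_ring_hom_id] torus_eval_simps)
next
  case (add P R)
  have "\<phi> (A_cls f (P + R)) = \<phi> (A_cls f P) \<oplus>\<^bsub>A_alg g\<^esub> \<phi> (A_cls f R)"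
    using \<phi> by (simp add: A_kalg_hom_def A_alg_add[symmetric] A_alg_carrier ring_hom_add)
  with add show ?case
    by (simp add: E_def A_eval_add[OF A_kalg_hom_closed[OF \<phi>] A_kalg_hom_closed[OF \<phi>] a t]
        is_ring_hom_add[OF is_ring_hom_subst4[OF is_ring_hom_id]])
next
  case (mult P R)
  have "\<phi> (A_cls f (P * R)) = \<phi> (A_cls f P) \<otimes>\<^bsub>A_alg g\<^esub> \<phi> (A_cls f R)"
    using \<phi> by (simp add: A_kalg_hom_def A_alg_mult[symmetric] A_alg_carrier ring_hom_mult)
  with mult show ?case
    by (simp add: E_def A_eval_mult[OF A_kalg_hom_closed[OF \<phi>] A_kalg_hom_closed[OF \<phi>] a t]
        is_ring_hom_mult[OF is_ring_hom_subst4[OF is_ring_hom_id]])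
qed (simp_all add: subst4_simps[OF is_ring_hom_id])

lemma A_kalg_hom_eval_Zv:
  fixes f g :: "'a::field poly"
  assumes \<phi>: "A_kalg_hom f g \<phi>" and a: "a \<noteq> 0" and t: "t \<noteq> 0"
  shows "A_eval g (\<phi> (A_cls f Zv)) a t = 1 / A_eval g (\<phi> (A_cls f Yv)) a t"
proof -
  have "A_eval g (\<phi> (A_cls f Yv)) a t * A_eval g (\<phi> (A_cls f Zv)) a t = 1"
    using A_eval_mult[OF A_kalg_hom_closed[OF \<phi>, of Yv] A_kalg_hom_closed[OF \<phi>, of Zv] a t]
      A_eval_one[OF a t, of g]
    by (simp add: A_kalg_hom_Yv_Zv[OF \<phi>])
  then show ?thesis
    by (metis inverse_unique inverse_eq_divide)
qed

lemma A_kalg_hom_eval_X1_X2: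
  fixes f g :: "'a::field poly"
  assumes \<phi>: "A_kalg_hom f g \<phi>" and a: "a \<noteq> 0" and t: "t \<noteq> 0"
  shows "A_eval g (\<phi> (A_cls f X1)) a t * A_eval g (\<phi> (A_cls f X2)) a t
    = poly f (A_eval g (\<phi> (A_cls f Yv)) a t)"
proof -
  have "A_cls f (X1 * X2) = A_cls f (hY f)"
    by (simp add: A_cls_eq_iff A_cong_generators(1))
  then show ?thesis
    using A_kalg_hom_eval[OF \<phi> a t, of "X1 * X2"] A_kalg_hom_eval[OF \<phi> a t, of "hY f"]
    by (simp add: is_ring_hom_mult[OF is_ring_hom_subst4[OF is_ring_hom_id]]
        subst4_simps[OF is_ring_hom_id] eval_poly_id)
qed

lemma A_kalg_hom_eval_monomial:
  fixes f g :: "'a::field poly"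
  assumes \<phi>: "A_kalg_hom f g \<phi>" and a: "a \<noteq> 0" and t: "t \<noteq> 0"
  shows "A_eval g (\<phi> (A_cls f (const4 c * y_powi k))) a t = c * A_eval g (\<phi> (A_cls f Yv)) a t powi k"
  using A_kalg_hom_eval[OF \<phi> a t, of "const4 c * y_powi k"]
  by (simp add: A_kalg_hom_eval_Zv[OF \<phi> a t] is_ring_hom_mult[OF is_ring_hom_subst4[OF is_ring_hom_id]]
      subst4_simps[OF is_ring_hom_id] subst4_y_powi)

text \<open>\<open>y\<close> is a unit, so its image is a unit of \<open>A_g\<close>, i.e. a scaled Laurent monomial \<open>c y\<^sup>k\<close>.\<close>

lemma A_kalg_hom_image_Yv:
  fixes f g :: "'a::field_char_0 poly"
  assumes \<phi>: "A_kalg_hom f g \<phi>" and g: "degree g \<ge> 1" "coeff g 0 \<noteq> 0"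
  obtains c k where "c \<noteq> 0" "\<phi> (A_cls f Yv) = A_cls g (const4 c * y_powi k)"
proof -
  obtain c k where c: "c \<noteq> 0"
    and Yv: "\<And>a t. a \<noteq> 0 \<Longrightarrow> t \<noteq> 0 \<Longrightarrow> A_eval g (\<phi> (A_cls f Yv)) a t = c * t powi k"
    using A_unit_eval[OF g A_kalg_hom_closed[OF \<phi>] A_kalg_hom_closed[OF \<phi>] A_kalg_hom_Yv_Zv[OF \<phi>]]
    by blast
  have "\<phi> (A_cls f Yv) = A_cls g (const4 c * y_powi k)"
    using g(2) Yv
    by (intro A_eval_eqI[OF _ A_kalg_hom_closed[OF \<phi>]])
      (auto simp: A_alg_carrier A_eval_A_cls torus_eval_hom_simps torus_eval_simps torus_eval_y_powi)
  with c show ?thesis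
    by (rule that)
qed

text \<open>Composing with the inverse isomorphism, \<open>y \<mapsto> c y\<^sup>k \<mapsto> c (c' y\<^sup>k\<^sup>')\<^sup>k = y\<close> forces \<open>k k' = 1\<close>.\<close>

lemma A_kalg_iso_image_Yv:
  fixes f g :: "'a::field_char_0 poly"
  assumes iso: "\<phi> \<in> ring_iso (A_alg f) (A_alg g)" and \<phi>: "A_kalg_hom f g \<phi>"
    and f: "degree f \<ge> 1" "coeff f 0 \<noteq> 0" and g: "degree g \<ge> 1" "coeff g 0 \<noteq> 0"
  obtains c k where "c \<noteq> 0" "k = 1 \<or> k = -1" "\<phi> (A_cls f Yv) = A_cls g (const4 c * y_powi k)"
proof -
  define \<psi> where "\<psi> = inv_into (carrier (A_alg f)) \<phi>"
  have \<psi>: "A_kalg_hom g f \<psi>"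
    unfolding \<psi>_def by (rule A_kalg_hom_inv[OF iso \<phi>])
  obtain c k where c: "c \<noteq> 0" and k: "\<phi> (A_cls f Yv) = A_cls g (const4 c * y_powi k)"
    using A_kalg_hom_image_Yv[OF \<phi> g] by blast
  obtain c' k' where c': "c' \<noteq> 0" and k': "\<psi> (A_cls g Yv) = A_cls f (const4 c' * y_powi k')"
    using A_kalg_hom_image_Yv[OF \<psi> f] by blast
  have "c * (c' * t powi k') powi k = t" if t: "t \<noteq> 0" for t :: 'a
  proof -
    have "\<psi> (\<phi> (A_cls f Yv)) = A_cls f Yv"
      using iso unfolding \<psi>_def by (simp add: ring_iso_def bij_betw_def A_alg_carrier)
    then have "t = A_eval f (\<psi> (A_cls g (const4 c * y_powi k))) 1 t"
      using t by (simp add: k A_eval_A_cls torus_eval_simps)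
    also have "\<dots> = c * A_eval f (\<psi> (A_cls g Yv)) 1 t powi k"
      by (rule A_kalg_hom_eval_monomial[OF \<psi> one_neq_zero t])
    also have "\<dots> = c * (c' * t powi k') powi k"
      using t by (simp add: k' A_eval_A_cls torus_eval_hom_simps torus_eval_simps torus_eval_y_powi)
    finally show ?thesis ..
  qed
  then have "k * k' = 1"
    by (rule powi_exponent_eq_1[OF c c'])
  then have "k = 1 \<or> k = -1"
    by (rule pos_zmult_eq_1_iff_lemma)
  then show ?thesis
    using that c k by blast
qed

lemma A_kalg_hom_surj_eval_depends_on_a:
  fixes f g :: "'a::field_char_0 poly"
  assumes \<phi>: "A_kalg_hom f g \<phi>" and surj: "\<phi> ` carrier (A_alg f) = carrier (A_alg g)"
  shows "\<exists>X \<in> {X1, X2, Yv, Zv}. A_eval g (\<phi> (A_cls f X)) 2 1 \<noteq> A_eval g (\<phi> (A_cls f X)) 1 1"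
proof (rule ccontr)
  define E where "E X a = A_eval g (\<phi> (A_cls f X)) a 1" for X a
  have two: "(2::'a) \<noteq> 0"
    by simp
  assume "\<not> ?thesis"
  then have "E X 2 = E X 1" if "X \<in> {X1, X2, Yv, Zv}" for X
    using that unfolding E_def by blast
  then have indep: "E P 2 = E P 1" for P
    using A_kalg_hom_eval[OF \<phi> two one_neq_zero, of P] A_kalg_hom_eval[OF \<phi> one_neq_zero one_neq_zero, of P]
    by (simp add: E_def)
  have "A_cls g X1 \<in> \<phi> ` carrier (A_alg f)"
    using surj by (simp add: A_alg_carrier)
  then obtain P where P: "\<phi> (A_cls f P) = A_cls g X1"
    by (auto simp: A_alg_carrier)
  then have "E P 2 = 2" "E P 1 = 1"
    using two by (simp_all add: E_def A_eval_A_cls torus_eval_simps)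
  with indep[of P] show False
    by simp
qed

text \<open>\<open>x1 x2 = f(y)\<close> in \<open>A_f\<close>, so \<open>f(c y\<^sup>k)\<close> is a product of two elements of \<open>A_g\<close>. By the dichotomy
  either \<open>g\<close> divides it (after clearing powers of \<open>y\<close>), or both factors lie in \<open>K[y\<^sup>\<plusminus>\<^sup>1]\<close>; in the
  latter case the images of all generators would be independent of \<open>a\<close>.\<close>

lemma A_kalg_iso_dvd:
  fixes f g R :: "'a::field_char_0 poly"
  assumes \<phi>: "A_kalg_hom f g \<phi>" and surj: "\<phi> ` carrier (A_alg f) = carrier (A_alg g)"
    and g0: "coeff g 0 \<noteq> 0" and y: "\<phi> (A_cls f Yv) = A_cls g (const4 c * y_powi k)"
    and R: "R \<noteq> 0" and fR: "\<And>t. t \<noteq> 0 \<Longrightarrow> t ^ N * poly f (c * t powi k) = poly R t"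
  shows "g dvd R"
proof -
  define E where "E X a t = A_eval g (\<phi> (A_cls f X)) a t" for X a t
  have Yv: "E Yv a t = c * t powi k" and Zv: "E Zv a t = 1 / (c * t powi k)"
    if "a \<noteq> 0" "t \<noteq> 0" for a t
    using that A_kalg_hom_eval_Zv[OF \<phi> that]
    by (simp_all add: E_def y A_eval_A_cls torus_eval_hom_simps torus_eval_simps torus_eval_y_powi)
  obtain P1 P2 where P: "\<phi> (A_cls f X1) = A_cls g P1" "\<phi> (A_cls f X2) = A_cls g P2"
    using A_kalg_hom_closed[OF \<phi>] by (metis A_alg_carrier rangeE)
  have X12: "E X1 a t = torus_eval g a t P1" "E X2 a t = torus_eval g a t P2"
    if "a \<noteq> 0" "t \<noteq> 0" for a t
    using that by (simp_all add: E_def P A_eval_A_cls)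
  have "\<forall>a t. a \<noteq> 0 \<longrightarrow> t \<noteq> 0 \<longrightarrow> t ^ N * (torus_eval g a t P1 * torus_eval g a t P2) = poly R t"
  proof (intro allI impI)
    fix a t :: 'a
    assume at: "a \<noteq> 0" "t \<noteq> 0"
    show "t ^ N * (torus_eval g a t P1 * torus_eval g a t P2) = poly R t"
      using A_kalg_hom_eval_X1_X2[OF \<phi> at] X12[OF at] Yv[OF at] fR[OF at(2)] by (simp add: E_def)
  qed
  with R show ?thesis
  proof (cases rule: torus_eval_product_dichotomy)
    case (divides M)
    then show ?thesis
      by (rule dvd_cancel_x_power[OF g0])
  next
    case (laurent C1 C2 n1 n2)
    have two: "(2::'a) \<noteq> 0"
      by simp
    have "E X1 2 1 = E X1 1 1" "E X2 2 1 = E X2 1 1"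
      using laurent(3,4) X12[OF two one_neq_zero] X12[OF one_neq_zero one_neq_zero] by simp_all
    moreover have "E Yv 2 1 = E Yv 1 1" "E Zv 2 1 = E Zv 1 1"
      using Yv[OF two one_neq_zero] Yv[OF one_neq_zero one_neq_zero]
        Zv[OF two one_neq_zero] Zv[OF one_neq_zero one_neq_zero] by simp_all
    ultimately have "E X 2 1 = E X 1 1" if "X \<in> {X1, X2, Yv, Zv}" for X
      using that by blast
    then show ?thesis
      using A_kalg_hom_surj_eval_depends_on_a[OF \<phi> surj] unfolding E_def by blast
  qed
qed

lemma scaled_if_dvd_pcompose:
  fixes f g :: "'a::field poly"
  assumes dvd: "g dvd pcompose f [:0, c:]" and c: "c \<noteq> 0" and f: "f \<noteq> 0"
    and deg: "degree g = degree f"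
  obtains l where "l \<noteq> 0" "\<And>y. poly g y = l * poly f (c * y)"
proof -
  have "pcompose f [:0, c:] \<noteq> 0" "degree (pcompose f [:0, c:]) = degree g"
    using c f deg by (simp_all add: pcompose_eq_0_iff degree_pcompose)
  then obtain l where l: "l \<noteq> 0" "pcompose f [:0, c:] = smult l g"
    using dvd_same_degree[OF dvd] by blast
  have "poly f (c * y) = l * poly g y" for y
    using arg_cong[OF l(2), of "\<lambda>p. poly p y"] by (simp add: poly_pcompose mult.commute)
  then show ?thesis
    using that[of "1 / l"] l(1) by simp
qed

lemma reflected_if_dvd_reflect_poly:
  fixes f g :: "'a::field poly"
  assumes dvd: "g dvd reflect_poly (pcompose f [:0, c:])" and c: "c \<noteq> 0" and f0: "coeff f 0 \<noteq> 0"
    and deg: "degree g = degree f"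
  obtains l where "l \<noteq> 0" "\<And>y. y \<noteq> 0 \<Longrightarrow> poly g y = l * y ^ degree f * poly f (c / y)"
proof -
  define Q where "Q = pcompose f [:0, c:]"
  have dQ: "degree Q = degree f"
    using c by (simp add: Q_def degree_pcompose)
  have "coeff Q 0 \<noteq> 0"
    using f0 by (simp add: Q_def poly_0_coeff_0[symmetric] poly_pcompose)
  then have "reflect_poly Q \<noteq> 0" "degree (reflect_poly Q) = degree g"
    using dQ deg by auto
  then obtain l where l: "l \<noteq> 0" "reflect_poly Q = smult l g"
    using dvd_same_degree dvd unfolding Q_def by blast
  have "y ^ degree f * poly f (c / y) = l * poly g y" if "y \<noteq> 0" for y
    using arg_cong[OF l(2), of "\<lambda>p. poly p y"] that dQ
    by (simp add: poly_reflect_poly_nz Q_def poly_pcompose divide_inverse mult.commute)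
  then show ?thesis
    using that[of "1 / l"] l(1) by (simp add: field_simps)
qed

lemma A_kalg_iso_imp_related:
  fixes f g :: "'a::field_char_0 poly"
  assumes s: "s \<ge> 1" and df: "degree f = s" and dg: "degree g = s"
    and f0: "coeff f 0 \<noteq> 0" and g0: "coeff g 0 \<noteq> 0"
    and iso: "A_kalg_iso f g"
  shows "\<exists>lam c. lam \<noteq> 0 \<and> c \<noteq> 0 \<and>
       ((\<forall>y. poly g y = lam * poly f (c * y)) \<or>
        (\<forall>y. y \<noteq> 0 \<longrightarrow> poly g y = lam * y ^ s * poly f (c / y)))"
proof -
  obtain \<phi> where \<phi>_iso: "\<phi> \<in> ring_iso (A_alg f) (A_alg g)" and \<phi>: "A_kalg_hom f g \<phi>"
    using iso unfolding A_kalg_iso_iff by blast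
  have surj: "\<phi> ` carrier (A_alg f) = carrier (A_alg g)"
    using \<phi>_iso by (simp add: ring_iso_def bij_betw_def)
  obtain c k where c: "c \<noteq> 0" and k: "k = 1 \<or> k = -1"
    and y: "\<phi> (A_cls f Yv) = A_cls g (const4 c * y_powi k)"
    using A_kalg_iso_image_Yv[OF \<phi>_iso \<phi>] s df dg f0 g0 by auto
  have f: "f \<noteq> 0" and deg: "degree g = degree f"
    using f0 df dg by auto
  from k show ?thesis
  proof
    assume "k = 1"
    then have "g dvd pcompose f [:0, c:]"
      using A_kalg_iso_dvd[OF \<phi> surj g0 y, of "pcompose f [:0, c:]" 0] c f
      by (simp add: pcompose_eq_0_iff poly_pcompose mult.commute)
    then obtain l where "l \<noteq> 0" "\<And>y. poly g y = l * poly f (c * y)"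
      using scaled_if_dvd_pcompose c f deg by blast
    with c show ?thesis
      by blast
  next
    assume "k = -1"
    have "y ^ s * poly f (c / y) = poly (reflect_poly (pcompose f [:0, c:])) y" if "y \<noteq> 0" for y
      using that c df by (simp add: poly_reflect_poly_nz degree_pcompose poly_pcompose divide_inverse mult.commute)
    moreover have "reflect_poly (pcompose f [:0, c:]) \<noteq> 0"
      using f c by (simp add: pcompose_eq_0_iff)
    ultimately have "g dvd reflect_poly (pcompose f [:0, c:])"
      using A_kalg_iso_dvd[OF \<phi> surj g0 y, of _ s] \<open>k = -1\<close>
      by (simp add: power_int_minus divide_inverse)
    then obtain l where "l \<noteq> 0" "\<And>y. y \<noteq> 0 \<Longrightarrow> poly g y = l * y ^ s * poly f (c / y)"
      using reflected_if_dvd_reflect_poly[OF _ c f0 deg] unfolding df by blast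
    with c show ?thesis
      by blast
  qed
qed

theorem proposition3p2:
  fixes f g :: "'a::field_char_0 poly" and s :: nat
  assumes "alg_closed_field TYPE('a)"
    and "s \<ge> 1"
    and "degree f = s" and "degree g = s"
    and "coeff f 0 \<noteq> 0" and "coeff g 0 \<noteq> 0"
  shows "A_kalg_iso f g \<longleftrightarrow>
    (\<exists>lam c. lam \<noteq> 0 \<and> c \<noteq> 0 \<and>
       ((\<forall>y. poly g y = lam * poly f (c * y)) \<or>
        (\<forall>y. y \<noteq> 0 \<longrightarrow> poly g y = lam * y ^ s * poly f (c / y))))"
proof
  assume "A_kalg_iso f g"
  then show "\<exists>lam c. lam \<noteq> 0 \<and> c \<noteq> 0 \<and>
       ((\<forall>y. poly g y = lam * poly f (c * y)) \<or>
        (\<forall>y. y \<noteq> 0 \<longrightarrow> poly g y = lam * y ^ s * poly f (c / y)))"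
    by (rule A_kalg_iso_imp_related[OF assms(2-6)])
next
  have "f \<noteq> 0" "g \<noteq> 0"
    using assms(5,6) by auto
  then show "A_kalg_iso f g" if "\<exists>lam c. lam \<noteq> 0 \<and> c \<noteq> 0 \<and>
       ((\<forall>y. poly g y = lam * poly f (c * y)) \<or>
        (\<forall>y. y \<noteq> 0 \<longrightarrow> poly g y = lam * y ^ s * poly f (c / y)))"
    using that A_kalg_iso_if_scaled A_kalg_iso_if_reflected by metis
qed

end
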